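(* Let $(X,\Sigma,\mu)$ be a semi-finite measure space, and let $E$ be the ideal in $\mathrm{L}^0(X,\Sigma,\mu)$ consisting of (equivalence classes of) measurable functions with $\sigma$-finite supports. Then $E$ admits a uo-Lebesgue topology, which is the topology of local convergence in measure, and $E$ has the countable sup property. Consequently: (1) every net in $E$ that converges locally in measure has an embedded sequence that converges almost everywhere as well as locally in measure to the same limit; (2) a sequence in $E$ converges locally in measure to $f\in E$ if and only if every subsequence has a further subsequence that converges almost everywhere to $f$.
   Context: $\mathrm{L}^0(X,\Sigma,\mu)$ is the vector lattice of measurable real functions modulo $\mu$-a.e. equality. A measure space is semi-finite if every set of infinite measure contains a measurable subset of finite positive measure. A net $(f_\alpha)$ converges locally in measure to $f$ if $\mu(\{t\in B: |f_\alpha(t)-f(t)|\geq\varepsilon\})\to0$ for every $\varepsilon>0$ and every $B\in\Sigma$ with $\mu(B)<\infty$. A uo-Lebesgue topology on a vector lattice is a Hausdorff linear topology with a zero neighbourhood basis of solid sets in which every uo-convergent net converges to the same limit (uo-convergence: $|x_\alpha-x|\wedge|y|\to0$ in order for all $y$; order convergence: there is a net $y_\beta\downarrow0$ such that for each $\beta_0$ eventually $|x_\alpha-x|\leq y_{\beta_0}$). Countable sup property: every subset with a supremum contains an at most countable subset with the same supremum. Embedded sequence: given a net $(x_\alpha)_{\alpha\in A}$, a sequence $(x_{\alpha_n})$ with $\alpha_1\leq\alpha_2\leq\dotsb$, strictly increasing when $A$ has no largest element. *)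

theory Defs
  imports "HOL-Analysis.Analysis"
begin

text \<open>Elements of L0 are represented by measurable real functions; the lattice
  operations are pointwise and equality/order are taken almost everywhere.\<close>

definition semifinite :: "'a measure \<Rightarrow> bool" where
  "semifinite M \<longleftrightarrow> (\<forall>A\<in>sets M. emeasure M A = \<infinity> \<longrightarrow>
     (\<exists>B\<in>sets M. B \<subseteq> A \<and> 0 < emeasure M B \<and> emeasure M B < \<infinity>))"

definition sigma_finite_support :: "'a measure \<Rightarrow> ('a \<Rightarrow> real) \<Rightarrow> bool" where
  "sigma_finite_support M f \<longleftrightarrow> (\<exists>A :: nat \<Rightarrow> 'a set.
     (\<forall>n. A n \<in> sets M \<and> emeasure M (A n) < \<infinity>) \<and>
     (AE t in M. f t \<noteq> 0 \<longrightarrow> t \<in> (\<Union>n. A n)))"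

definition Esp :: "'a measure \<Rightarrow> ('a \<Rightarrow> real) set" where
  "Esp M = {f \<in> borel_measurable M. sigma_finite_support M f}"

definition aeq :: "'a measure \<Rightarrow> ('a \<Rightarrow> real) \<Rightarrow> ('a \<Rightarrow> real) \<Rightarrow> bool" where
  "aeq M f g \<longleftrightarrow> (AE t in M. f t = g t)"

definition ale :: "'a measure \<Rightarrow> ('a \<Rightarrow> real) \<Rightarrow> ('a \<Rightarrow> real) \<Rightarrow> bool" where
  "ale M f g \<longleftrightarrow> (AE t in M. f t \<le> g t)"

definition directed_set :: "'i set \<Rightarrow> ('i \<Rightarrow> 'i \<Rightarrow> bool) \<Rightarrow> bool" where
  "directed_set A le \<longleftrightarrow> A \<noteq> {} \<and> (\<forall>a\<in>A. le a a) \<and>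
     (\<forall>a\<in>A. \<forall>b\<in>A. \<forall>c\<in>A. le a b \<longrightarrow> le b c \<longrightarrow> le a c) \<and>
     (\<forall>a\<in>A. \<forall>b\<in>A. \<exists>c\<in>A. le a c \<and> le b c)"

definition net_ev :: "'i set \<Rightarrow> ('i \<Rightarrow> 'i \<Rightarrow> bool) \<Rightarrow> ('i \<Rightarrow> bool) \<Rightarrow> bool" where
  "net_ev A le P \<longleftrightarrow> (\<exists>a\<in>A. \<forall>b\<in>A. le a b \<longrightarrow> P b)"

definition lm_conv :: "'a measure \<Rightarrow> 'i set \<Rightarrow> ('i \<Rightarrow> 'i \<Rightarrow> bool) \<Rightarrow> ('i \<Rightarrow> 'a \<Rightarrow> real)
    \<Rightarrow> ('a \<Rightarrow> real) \<Rightarrow> bool" where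
  "lm_conv M A le x f \<longleftrightarrow> (\<forall>\<epsilon>>0. \<forall>B\<in>sets M. emeasure M B < \<infinity> \<longrightarrow>
     (\<forall>\<delta>>0. net_ev A le (\<lambda>\<alpha>. measure M {t\<in>B. \<epsilon> \<le> \<bar>x \<alpha> t - f t\<bar>} < \<delta>)))"

definition lm_topology :: "'a measure \<Rightarrow> ('a \<Rightarrow> real) topology" where
  "lm_topology M = topology (\<lambda>U. U \<subseteq> Esp M \<and> (\<forall>f\<in>U. \<exists>B \<epsilon>. B \<in> sets M \<and>
      emeasure M B < \<infinity> \<and> \<epsilon> > 0 \<and>
      {g \<in> Esp M. measure M {t\<in>B. \<epsilon> \<le> \<bar>g t - f t\<bar>} < \<epsilon>} \<subseteq> U))"

definition net_limitin :: "('b topology) \<Rightarrow> 'i set \<Rightarrow> ('i \<Rightarrow> 'i \<Rightarrow> bool) \<Rightarrow> ('i \<Rightarrow> 'b)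
    \<Rightarrow> 'b \<Rightarrow> bool" where
  "net_limitin X A le x l \<longleftrightarrow> l \<in> topspace X \<and>
     (\<forall>U. openin X U \<and> l \<in> U \<longrightarrow> net_ev A le (\<lambda>\<alpha>. x \<alpha> \<in> U))"

text \<open>D is a downward directed subset of E with infimum 0 in E (the range of a net
  decreasing to 0).\<close>
definition dir_inf_zero :: "'a measure \<Rightarrow> ('a \<Rightarrow> real) set \<Rightarrow> bool" where
  "dir_inf_zero M D \<longleftrightarrow> D \<subseteq> Esp M \<and> D \<noteq> {} \<and>
     (\<forall>d1\<in>D. \<forall>d2\<in>D. \<exists>d3\<in>D. ale M d3 d1 \<and> ale M d3 d2) \<and>
     (\<forall>d\<in>D. ale M (\<lambda>t. 0) d) \<and>
     (\<forall>z\<in>Esp M. (\<forall>d\<in>D. ale M z d) \<longrightarrow> ale M z (\<lambda>t. 0))"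

definition order_conv :: "'a measure \<Rightarrow> 'i set \<Rightarrow> ('i \<Rightarrow> 'i \<Rightarrow> bool) \<Rightarrow> ('i \<Rightarrow> 'a \<Rightarrow> real)
    \<Rightarrow> ('a \<Rightarrow> real) \<Rightarrow> bool" where
  "order_conv M A le x f \<longleftrightarrow> (\<exists>D. dir_inf_zero M D \<and>
     (\<forall>d\<in>D. net_ev A le (\<lambda>\<alpha>. ale M (\<lambda>t. \<bar>x \<alpha> t - f t\<bar>) d)))"

definition uo_conv :: "'a measure \<Rightarrow> 'i set \<Rightarrow> ('i \<Rightarrow> 'i \<Rightarrow> bool) \<Rightarrow> ('i \<Rightarrow> 'a \<Rightarrow> real)
    \<Rightarrow> ('a \<Rightarrow> real) \<Rightarrow> bool" where
  "uo_conv M A le x f \<longleftrightarrow> (\<forall>u\<in>Esp M.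
     order_conv M A le (\<lambda>\<alpha> t. min \<bar>x \<alpha> t - f t\<bar> \<bar>u t\<bar>) (\<lambda>t. 0))"

definition solid :: "'a measure \<Rightarrow> ('a \<Rightarrow> real) set \<Rightarrow> bool" where
  "solid M N \<longleftrightarrow> N \<subseteq> Esp M \<and>
     (\<forall>f\<in>N. \<forall>g\<in>Esp M. ale M (\<lambda>t. \<bar>g t\<bar>) (\<lambda>t. \<bar>f t\<bar>) \<longrightarrow> g \<in> N)"

definition zero_nbhd :: "('a \<Rightarrow> real) topology \<Rightarrow> ('a \<Rightarrow> real) set \<Rightarrow> bool" where
  "zero_nbhd X N \<longleftrightarrow> (\<exists>U. openin X U \<and> (\<lambda>t. 0) \<in> U \<and> U \<subseteq> N)"

text \<open>A Hausdorff linear topology on E (represented on representatives, with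
  open sets saturated under a.e. equality) having a zero neighbourhood basis of
  solid sets.  The uo-Lebesgue condition on nets is stated separately, since it
  quantifies over nets of arbitrary index type.\<close>
definition solid_linear_top :: "'a measure \<Rightarrow> ('a \<Rightarrow> real) topology \<Rightarrow> bool" where
  "solid_linear_top M X \<longleftrightarrow>
     topspace X = Esp M \<and>
     (\<forall>U f g. openin X U \<and> f \<in> U \<and> g \<in> Esp M \<and> aeq M f g \<longrightarrow> g \<in> U) \<and>
     (\<forall>f\<in>Esp M. \<forall>g\<in>Esp M. \<not> aeq M f g \<longrightarrow>
        (\<exists>U V. openin X U \<and> openin X V \<and> f \<in> U \<and> g \<in> V \<and> U \<inter> V = {})) \<and>
     continuous_map (prod_topology X X) X (\<lambda>(f, g). \<lambda>t. f t + g t) \<and>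
     continuous_map (prod_topology euclideanreal X) X (\<lambda>(c, f). \<lambda>t. c * f t) \<and>
     (\<forall>W. zero_nbhd X W \<longrightarrow> (\<exists>N. solid M N \<and> zero_nbhd X N \<and> N \<subseteq> W))"

definition is_sup_E :: "'a measure \<Rightarrow> ('a \<Rightarrow> real) set \<Rightarrow> ('a \<Rightarrow> real) \<Rightarrow> bool" where
  "is_sup_E M S s \<longleftrightarrow> s \<in> Esp M \<and> (\<forall>f\<in>S. ale M f s) \<and>
     (\<forall>u\<in>Esp M. (\<forall>f\<in>S. ale M f u) \<longrightarrow> ale M s u)"

definition countable_sup_property :: "'a measure \<Rightarrow> bool" where
  "countable_sup_property M \<longleftrightarrow> (\<forall>S s. S \<subseteq> Esp M \<and> is_sup_E M S s \<longrightarrow>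
     (\<exists>S0\<subseteq>S. countable S0 \<and> is_sup_E M S0 s))"

definition embedded_seq :: "'i set \<Rightarrow> ('i \<Rightarrow> 'i \<Rightarrow> bool) \<Rightarrow> (nat \<Rightarrow> 'i) \<Rightarrow> bool" where
  "embedded_seq A le \<alpha> \<longleftrightarrow> (\<forall>n. \<alpha> n \<in> A \<and> le (\<alpha> n) (\<alpha> (Suc n))) \<and>
     (\<not> (\<exists>a\<in>A. \<forall>b\<in>A. le b a) \<longrightarrow> (\<forall>n. \<not> le (\<alpha> (Suc n)) (\<alpha> n)))"

end

theory Submission
  imports Defs
begin

text \<open>The topology is generated by the sets of g with \<open>\<mu>{t\<in>B. e \<le> \<bar>g t - f t\<bar>} < e\<close>,
  B of finite measure. A triangle inequality for these deviation measures makes them a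
  neighbourhood base of a linear topology that is solid at 0, and it is Hausdorff on a.e.-classes
  because every element of E vanishes off a \<open>\<sigma>\<close>-finite set.
  The countable sup property comes from maximising, over countable subfamilies C, the integral over
  B of \<open>sup\<^sub>f\<^sub>\<in>\<^sub>C arctan f\<close>. Applied to the negatives of a downward directed set D with
  infimum 0, the same argument shows that D has elements that are small in measure on any set of
  finite measure, so uo-convergence implies local convergence in measure.
  An embedded sequence is chosen along the net with deviation below \<open>2\<^sup>-\<^sup>n\<close> on sets of finite measure
  that exhaust the supports of f and of the terms already chosen; Borel-Cantelli then gives a.e.
  convergence.\<close>

section \<open>The ideal of functions with \<open>\<sigma>\<close>-finite support\<close>

lemma Esp_borel_measurable[measurable_dest]: "f \<in> Esp M \<Longrightarrow> f \<in> borel_measurable M"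
  by (simp add: Esp_def)

lemma Esp_iff:
  "f \<in> Esp M \<longleftrightarrow> f \<in> borel_measurable M \<and>
     (\<exists>S :: nat \<Rightarrow> 'a set. (\<forall>n. S n \<in> fmeasurable M) \<and>
        (AE t in M. f t \<noteq> 0 \<longrightarrow> t \<in> (\<Union>n. S n)))"
  unfolding Esp_def sigma_finite_support_def fmeasurable_def by simp

definition support_cover :: "'a measure \<Rightarrow> ('a \<Rightarrow> real) \<Rightarrow> nat \<Rightarrow> 'a set" where
  "support_cover M h =
     (SOME S :: nat \<Rightarrow> 'a set. (\<forall>n. S n \<in> fmeasurable M) \<and> (AE t in M. h t \<noteq> 0 \<longrightarrow> t \<in> (\<Union>n. S n)))"

lemma
  assumes "h \<in> Esp M"
  shows support_cover_fmeasurable: "support_cover M h n \<in> fmeasurable M"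
    and AE_support_cover: "AE t in M. h t \<noteq> 0 \<longrightarrow> t \<in> (\<Union>n. support_cover M h n)"
proof -
  have "\<exists>S :: nat \<Rightarrow> 'a set. (\<forall>n. S n \<in> fmeasurable M) \<and> (AE t in M. h t \<noteq> 0 \<longrightarrow> t \<in> (\<Union>n. S n))"
    using assms by (simp add: Esp_iff)
  then have "(\<forall>n. support_cover M h n \<in> fmeasurable M) \<and>
      (AE t in M. h t \<noteq> 0 \<longrightarrow> t \<in> (\<Union>n. support_cover M h n))"
    unfolding support_cover_def by (rule someI_ex)
  then show "support_cover M h n \<in> fmeasurable M"
    and "AE t in M. h t \<noteq> 0 \<longrightarrow> t \<in> (\<Union>n. support_cover M h n)"
    by auto
qed

lemma EspI:
  fixes S :: "nat \<Rightarrow> 'a set"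
  assumes "f \<in> borel_measurable M" "\<And>n. S n \<in> fmeasurable M"
    and "AE t in M. f t \<noteq> 0 \<longrightarrow> t \<in> (\<Union>n. S n)"
  shows "f \<in> Esp M"
  using assms by (auto simp: Esp_iff)

lemma Esp_add:
  assumes "f \<in> Esp M" "g \<in> Esp M"
  shows "(\<lambda>t. f t + g t) \<in> Esp M"
proof (rule EspI)
  show "(\<lambda>t. f t + g t) \<in> borel_measurable M" using assms by measurable
  show "support_cover M f n \<union> support_cover M g n \<in> fmeasurable M" for n
    using assms by (intro fmeasurable.Un support_cover_fmeasurable)
  show "AE t in M. f t + g t \<noteq> 0 \<longrightarrow> t \<in> (\<Union>n. support_cover M f n \<union> support_cover M g n)"
    using AE_support_cover[OF assms(1)] AE_support_cover[OF assms(2)] by eventually_elim auto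
qed

lemma Esp_cmult:
  assumes "f \<in> Esp M"
  shows "(\<lambda>t. c * f t) \<in> Esp M"
proof (rule EspI)
  show "(\<lambda>t. c * f t) \<in> borel_measurable M" using assms by measurable
  show "support_cover M f n \<in> fmeasurable M" for n
    using assms by (rule support_cover_fmeasurable)
  show "AE t in M. c * f t \<noteq> 0 \<longrightarrow> t \<in> (\<Union>n. support_cover M f n)"
    using AE_support_cover[OF assms] by eventually_elim auto
qed

lemma Esp_vanishing_outside:
  assumes "g \<in> borel_measurable M" "B \<in> fmeasurable M" "\<And>t. t \<notin> B \<Longrightarrow> g t = 0"
  shows "g \<in> Esp M"
  using assms by (intro EspI[where S = "\<lambda>_. B"]) auto

lemma Esp_zero: "(\<lambda>t. 0) \<in> Esp M"
  by (rule Esp_vanishing_outside[where B = "{}"]) (auto intro: fmeasurableI)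

lemma measure_mono_AE_fmeasurable:
  assumes "AE t in M. t \<in> X \<longrightarrow> t \<in> Y" "X \<in> sets M" "Y \<in> fmeasurable M"
  shows "measure M X \<le> measure M Y"
proof -
  have "emeasure M X \<le> emeasure M Y"
    using assms by (intro emeasure_mono_AE) auto
  then have "X \<in> fmeasurable M"
    using assms(2,3) by (auto simp: fmeasurable_def)
  with \<open>emeasure M X \<le> emeasure M Y\<close> assms(3) show ?thesis
    by (simp add: emeasure_eq_measure2)
qed

lemma measure_le_Un_fmeasurable:
  assumes "X \<subseteq> Y \<union> Z" "X \<in> sets M" "Y \<in> fmeasurable M" "Z \<in> fmeasurable M"
  shows "measure M X \<le> measure M Y + measure M Z"
proof -
  have "measure M X \<le> measure M (Y \<union> Z)"
    using assms by (intro measure_mono_fmeasurable fmeasurable.Un) auto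
  also have "\<dots> \<le> measure M Y + measure M Z"
    using assms by (intro measure_Un_le) auto
  finally show ?thesis .
qed

lemma fmeasurable_measure_eq_0_iff:
  assumes "X \<in> fmeasurable M"
  shows "measure M X = 0 \<longleftrightarrow> (AE t in M. t \<notin> X)"
  using assms by (auto simp: AE_iff_null_sets[symmetric] emeasure_eq_measure2 null_sets_def
      intro: measure_eq_0_null_sets)

lemma measure_deviation_mono:
  fixes f g :: "'a \<Rightarrow> real"
  assumes "B \<in> fmeasurable M" "f \<in> Esp M" "g \<in> Esp M" "e' \<le> e"
  shows "measure M {t\<in>B. e \<le> \<bar>g t - f t\<bar>} \<le> measure M {t\<in>B. e' \<le> \<bar>g t - f t\<bar>}"
  using assms by (intro measure_mono_fmeasurable fmeasurableI2[OF assms(1)]) auto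

section \<open>The topology of local convergence in measure\<close>

definition lm_ball :: "'a measure \<Rightarrow> 'a set \<Rightarrow> real \<Rightarrow> ('a \<Rightarrow> real) \<Rightarrow> ('a \<Rightarrow> real) set" where
  "lm_ball M B e f = {g \<in> Esp M. measure M {t\<in>B. e \<le> \<bar>g t - f t\<bar>} < e}"

lemma lm_ball_subset_Esp: "lm_ball M B e f \<subseteq> Esp M"
  by (auto simp: lm_ball_def)

lemma centre_in_lm_ball: "f \<in> Esp M \<Longrightarrow> e > 0 \<Longrightarrow> f \<in> lm_ball M B e f"
  by (simp add: lm_ball_def)

lemma lm_ball_subset:
  assumes "B \<subseteq> B'" "B \<in> sets M" "B' \<in> fmeasurable M" "e' \<le> e" "f \<in> Esp M"
  shows "lm_ball M B' e' f \<subseteq> lm_ball M B e f"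
proof
  fix g assume g: "g \<in> lm_ball M B' e' f"
  then have [measurable]: "g \<in> Esp M" by (simp add: lm_ball_def)
  note [measurable] = \<open>f \<in> Esp M\<close> \<open>B \<in> sets M\<close> \<open>B' \<in> fmeasurable M\<close>
  have "measure M {t\<in>B. e \<le> \<bar>g t - f t\<bar>} \<le> measure M {t\<in>B'. e' \<le> \<bar>g t - f t\<bar>}"
    using assms by (intro measure_mono_fmeasurable fmeasurableI2[OF assms(3)]) auto
  with g assms(4) show "g \<in> lm_ball M B e f" by (auto simp: lm_ball_def)
qed

lemma lm_ball_triangle:
  assumes "g \<in> lm_ball M B a f" "f \<in> Esp M" "B \<in> fmeasurable M"
  shows "lm_ball M B b g \<subseteq> lm_ball M B (a + b) f"
proof
  fix h assume h: "h \<in> lm_ball M B b g"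
  note [measurable] = \<open>f \<in> Esp M\<close> \<open>B \<in> fmeasurable M\<close>
    lm_ball_subset_Esp[THEN subsetD, OF assms(1)]
    lm_ball_subset_Esp[THEN subsetD, OF h]
  have "measure M {t\<in>B. a + b \<le> \<bar>h t - f t\<bar>}
      \<le> measure M {t\<in>B. a \<le> \<bar>g t - f t\<bar>} + measure M {t\<in>B. b \<le> \<bar>h t - g t\<bar>}"
    by (rule measure_le_Un_fmeasurable) (auto intro: fmeasurableI2[OF assms(3)])
  also have "\<dots> < a + b"
    using assms(1) h by (intro add_strict_mono) (auto simp: lm_ball_def)
  finally show "h \<in> lm_ball M B (a + b) f"
    using h by (simp add: lm_ball_def)
qed

lemma lm_ball_Un_min:
  assumes "f \<in> Esp M" "B1 \<in> fmeasurable M" "B2 \<in> fmeasurable M"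
  shows "lm_ball M (B1 \<union> B2) (min e1 e2) f \<subseteq> lm_ball M B1 e1 f \<inter> lm_ball M B2 e2 f"
proof -
  have B12: "B1 \<union> B2 \<in> fmeasurable M" using assms by (intro fmeasurable.Un)
  have "lm_ball M (B1 \<union> B2) (min e1 e2) f \<subseteq> lm_ball M B1 e1 f"
    using assms B12 by (intro lm_ball_subset) auto
  moreover have "lm_ball M (B1 \<union> B2) (min e1 e2) f \<subseteq> lm_ball M B2 e2 f"
    using assms B12 by (intro lm_ball_subset) auto
  ultimately show ?thesis by blast
qed

lemma openin_lm_topology:
  "openin (lm_topology M) U \<longleftrightarrow>
     U \<subseteq> Esp M \<and> (\<forall>f\<in>U. \<exists>B\<in>fmeasurable M. \<exists>e>0. lm_ball M B e f \<subseteq> U)"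
    (is "_ \<longleftrightarrow> ?open U")
proof -
  have "lm_topology M = topology (\<lambda>U. U \<subseteq> Esp M \<and> (\<forall>f\<in>U. \<exists>B \<epsilon>. B \<in> sets M \<and>
      emeasure M B < \<infinity> \<and> \<epsilon> > 0 \<and> lm_ball M B \<epsilon> f \<subseteq> U))"
    unfolding lm_topology_def lm_ball_def ..
  also have "\<dots> = topology ?open"
    by (rule arg_cong[where f = topology]) (force simp: fmeasurable_def)
  moreover have "istopology ?open"
    unfolding istopology_def
  proof (rule conjI; intro allI impI)
    fix S T assume S: "?open S" and T: "?open T"
    have "\<exists>B\<in>fmeasurable M. \<exists>e>0. lm_ball M B e f \<subseteq> S \<inter> T" if f: "f \<in> S \<inter> T" for f
    proof -
      obtain B1 e1 where 1: "B1 \<in> fmeasurable M" "e1 > 0" "lm_ball M B1 e1 f \<subseteq> S"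
        using S f by blast
      obtain B2 e2 where 2: "B2 \<in> fmeasurable M" "e2 > 0" "lm_ball M B2 e2 f \<subseteq> T"
        using T f by blast
      have "f \<in> Esp M" using S f by blast
      then have "lm_ball M (B1 \<union> B2) (min e1 e2) f \<subseteq> S \<inter> T"
        using lm_ball_Un_min[OF _ 1(1) 2(1)] 1(3) 2(3) by blast
      moreover have "B1 \<union> B2 \<in> fmeasurable M" using 1 2 by (intro fmeasurable.Un)
      ultimately show ?thesis using 1 2 by (intro bexI[of _ "B1 \<union> B2"] exI[of _ "min e1 e2"]) auto
    qed
    with S show "?open (S \<inter> T)" by blast
  next
    fix K assume K: "\<forall>S\<in>K. ?open S"
    show "?open (\<Union>K)"
    proof (intro conjI ballI)
      show "\<Union>K \<subseteq> Esp M" using K by (simp add: Sup_le_iff)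
      fix f assume "f \<in> \<Union>K"
      then obtain S where S: "S \<in> K" "f \<in> S" by blast
      from K S(1) have "?open S" ..
      with S(2) obtain B e where "B \<in> fmeasurable M" "e > 0" "lm_ball M B e f \<subseteq> S" by blast
      moreover have "S \<subseteq> \<Union>K" using S(1) by (rule Union_upper)
      ultimately show "\<exists>B\<in>fmeasurable M. \<exists>e>0. lm_ball M B e f \<subseteq> \<Union>K" by blast
    qed
  qed
  ultimately show ?thesis by simp
qed

lemma topspace_lm_topology: "topspace (lm_topology M) = Esp M"
proof
  have "openin (lm_topology M) (Esp M)"
    unfolding openin_lm_topology
  proof (intro conjI ballI)
    fix f
    have "{} \<in> fmeasurable M" by (rule fmeasurableI) auto
    then show "\<exists>B\<in>fmeasurable M. \<exists>e>0. lm_ball M B e f \<subseteq> Esp M"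
      using lm_ball_subset_Esp[of M "{}" 1 f] by (intro bexI exI[of _ 1]) auto
  qed simp
  then show "Esp M \<subseteq> topspace (lm_topology M)" by (rule openin_subset)
  show "topspace (lm_topology M) \<subseteq> Esp M"
    using openin_topspace[of "lm_topology M"] unfolding openin_lm_topology ..
qed

lemma open_subset_lm_ball:
  assumes f: "f \<in> Esp M" and B: "B \<in> fmeasurable M" and "e > 0"
  obtains V where "openin (lm_topology M) V" "f \<in> V" "V \<subseteq> lm_ball M B e f"
proof
  define V where "V = (\<Union>e'\<in>{0<..<e}. lm_ball M B e' f)"
  show "f \<in> V"
    unfolding V_def using f \<open>e > 0\<close> by (intro UN_I[of "e/2"] centre_in_lm_ball) auto
  have shrink: "lm_ball M B e' f \<subseteq> lm_ball M B e f" if "e' < e" for e'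
    using B f that by (intro lm_ball_subset) auto
  show "V \<subseteq> lm_ball M B e f"
    unfolding V_def by (intro UN_least shrink) simp
  show "openin (lm_topology M) V"
    unfolding openin_lm_topology
  proof (intro conjI ballI)
    show "V \<subseteq> Esp M" unfolding V_def using lm_ball_subset_Esp by blast
    fix g assume "g \<in> V"
    then obtain e' where e': "0 < e'" "e' < e" "g \<in> lm_ball M B e' f" unfolding V_def by auto
    have "lm_ball M B ((e - e') / 2) g \<subseteq> lm_ball M B (e' + (e - e') / 2) f"
      using lm_ball_triangle[OF e'(3) f B] .
    also have "\<dots> \<subseteq> V"
      unfolding V_def using e' by (intro UN_upper) (auto simp: field_simps)
    finally show "\<exists>B\<in>fmeasurable M. \<exists>r>0. lm_ball M B r g \<subseteq> V"
      using B e' by (intro bexI[OF _ B] exI[of _ "(e - e') / 2"]) auto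
  qed
qed

lemma net_ev_mono: "net_ev A le P \<Longrightarrow> (\<And>a. a \<in> A \<Longrightarrow> P a \<Longrightarrow> Q a) \<Longrightarrow> net_ev A le Q"
  unfolding net_ev_def by blast

lemma lm_conv_iff_lm_ball:
  assumes "\<forall>\<alpha>\<in>A. x \<alpha> \<in> Esp M" "f \<in> Esp M"
  shows "lm_conv M A le x f \<longleftrightarrow>
    (\<forall>B\<in>fmeasurable M. \<forall>e>0. net_ev A le (\<lambda>\<alpha>. x \<alpha> \<in> lm_ball M B e f))"
proof (intro iffI ballI allI impI)
  fix B and e :: real assume L: "lm_conv M A le x f" and "B \<in> fmeasurable M" "e > 0"
  then have "net_ev A le (\<lambda>\<alpha>. measure M {t\<in>B. e \<le> \<bar>x \<alpha> t - f t\<bar>} < e)"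
    unfolding lm_conv_def fmeasurable_def by blast
  then show "net_ev A le (\<lambda>\<alpha>. x \<alpha> \<in> lm_ball M B e f)"
    by (rule net_ev_mono) (use assms(1) in \<open>simp add: lm_ball_def\<close>)
next
  assume R: "\<forall>B\<in>fmeasurable M. \<forall>e>0. net_ev A le (\<lambda>\<alpha>. x \<alpha> \<in> lm_ball M B e f)"
  show "lm_conv M A le x f"
    unfolding lm_conv_def
  proof (intro allI impI ballI)
    fix \<epsilon> \<delta> :: real and B assume "\<epsilon> > 0" "B \<in> sets M" "emeasure M B < \<infinity>" "\<delta> > 0"
    then have B: "B \<in> fmeasurable M" and "min \<epsilon> \<delta> > 0" by (auto intro: fmeasurableI)
    with R have "net_ev A le (\<lambda>\<alpha>. x \<alpha> \<in> lm_ball M B (min \<epsilon> \<delta>) f)" by blast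
    then show "net_ev A le (\<lambda>\<alpha>. measure M {t\<in>B. \<epsilon> \<le> \<bar>x \<alpha> t - f t\<bar>} < \<delta>)"
    proof (rule net_ev_mono)
      fix a assume "x a \<in> lm_ball M B (min \<epsilon> \<delta>) f"
      then have "x a \<in> Esp M" "measure M {t\<in>B. min \<epsilon> \<delta> \<le> \<bar>x a t - f t\<bar>} < min \<epsilon> \<delta>"
        by (auto simp: lm_ball_def)
      moreover have "measure M {t\<in>B. \<epsilon> \<le> \<bar>x a t - f t\<bar>} \<le> measure M {t\<in>B. min \<epsilon> \<delta> \<le> \<bar>x a t - f t\<bar>}"
        using B assms(2) \<open>x a \<in> Esp M\<close> by (intro measure_deviation_mono) auto
      ultimately show "measure M {t\<in>B. \<epsilon> \<le> \<bar>x a t - f t\<bar>} < \<delta>" by linarith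
    qed
  qed
qed

lemma net_limitin_lm_topology_iff_lm_conv:
  assumes x: "\<forall>\<alpha>\<in>A. x \<alpha> \<in> Esp M" and f: "f \<in> Esp M"
  shows "net_limitin (lm_topology M) A le x f \<longleftrightarrow> lm_conv M A le x f"
  unfolding lm_conv_iff_lm_ball[OF assms] net_limitin_def topspace_lm_topology
proof (intro iffI conjI ballI allI impI; (elim conjE)?)
  fix B and e :: real
  assume L: "\<forall>U. openin (lm_topology M) U \<and> f \<in> U \<longrightarrow> net_ev A le (\<lambda>\<alpha>. x \<alpha> \<in> U)"
    and "B \<in> fmeasurable M" "e > 0"
  then obtain V where "openin (lm_topology M) V" "f \<in> V" and V: "V \<subseteq> lm_ball M B e f"
    using open_subset_lm_ball[OF f] by metis
  with L have "net_ev A le (\<lambda>\<alpha>. x \<alpha> \<in> V)" by blast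
  then show "net_ev A le (\<lambda>\<alpha>. x \<alpha> \<in> lm_ball M B e f)"
    by (rule net_ev_mono) (use V in blast)
next
  fix U assume R: "\<forall>B\<in>fmeasurable M. \<forall>e>0. net_ev A le (\<lambda>\<alpha>. x \<alpha> \<in> lm_ball M B e f)"
    and "openin (lm_topology M) U" "f \<in> U"
  then obtain B e where "B \<in> fmeasurable M" "e > 0" and U: "lm_ball M B e f \<subseteq> U"
    unfolding openin_lm_topology by blast
  with R have "net_ev A le (\<lambda>\<alpha>. x \<alpha> \<in> lm_ball M B e f)" by blast
  then show "net_ev A le (\<lambda>\<alpha>. x \<alpha> \<in> U)"
    by (rule net_ev_mono) (use U in blast)
qed (use f in auto)

lemma deviation_pos_if_not_aeq:
  fixes f g :: "'a \<Rightarrow> real"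
  assumes f: "f \<in> Esp M" and g: "g \<in> Esp M" and "\<not> aeq M f g"
  shows "\<exists>B\<in>fmeasurable M. \<exists>\<rho>>0. measure M {t\<in>B. \<rho> \<le> \<bar>g t - f t\<bar>} > 0"
proof (rule ccontr)
  assume "\<not> ?thesis"
  then have null: "measure M {t\<in>B. \<rho> \<le> \<bar>g t - f t\<bar>} = 0" if "B \<in> fmeasurable M" "\<rho> > 0" for B \<rho>
    using that measure_nonneg[of M] by (meson not_less order.antisym)
  define C where "C n = support_cover M f n \<union> support_cover M g n" for n
  have C: "C n \<in> fmeasurable M" for n
    unfolding C_def using f g by (intro fmeasurable.Un support_cover_fmeasurable)
  note [measurable] = f g
  have "AE t in M. t \<notin> {t\<in>C n. inverse (Suc k) \<le> \<bar>g t - f t\<bar>}" for n k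
    using null[OF _ positive_imp_inverse_positive] C
    by (subst fmeasurable_measure_eq_0_iff[symmetric]) (auto intro: fmeasurableI2[OF C])
  then have "AE t in M. t \<in> C n \<longrightarrow> \<bar>g t - f t\<bar> < inverse (Suc k)" for n k
    by (auto simp: not_le)
  then have "AE t in M. \<forall>n k. t \<in> C n \<longrightarrow> \<bar>g t - f t\<bar> < inverse (Suc k)"
    unfolding AE_all_countable by blast
  with AE_support_cover[OF f] AE_support_cover[OF g] have "AE t in M. f t = g t"
  proof eventually_elim
    case (elim t)
    show "f t = g t"
    proof (rule ccontr)
      assume "f t \<noteq> g t"
      then have "f t \<noteq> 0 \<or> g t \<noteq> 0" by auto
      then obtain n where "t \<in> C n" using elim(1,2) unfolding C_def by blast
      moreover obtain k where "inverse (Suc k) < \<bar>g t - f t\<bar>"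
        using reals_Archimedean[of "\<bar>g t - f t\<bar>"] \<open>f t \<noteq> g t\<close> by auto
      ultimately show False using elim(3) by (meson less_asym)
    qed
  qed
  with \<open>\<not> aeq M f g\<close> show False by (simp add: aeq_def)
qed

lemma lm_topology_separates:
  fixes f g :: "'a \<Rightarrow> real"
  assumes f: "f \<in> Esp M" and g: "g \<in> Esp M" and "\<not> aeq M f g"
  shows "\<exists>U V. openin (lm_topology M) U \<and> openin (lm_topology M) V \<and> f \<in> U \<and> g \<in> V \<and> U \<inter> V = {}"
proof -
  obtain B \<rho> where B: "B \<in> fmeasurable M" and "\<rho> > 0"
    and m: "measure M {t\<in>B. \<rho> \<le> \<bar>g t - f t\<bar>} > 0" (is "?m > 0")
    using deviation_pos_if_not_aeq[OF assms] by blast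
  define \<eta> where "\<eta> = min (\<rho> / 2) (?m / 2)"
  have "\<eta> > 0" using \<open>\<rho> > 0\<close> m by (simp add: \<eta>_def)
  have "lm_ball M B \<eta> f \<inter> lm_ball M B \<eta> g = {}"
  proof (rule equals0I)
    fix h assume h: "h \<in> lm_ball M B \<eta> f \<inter> lm_ball M B \<eta> g"
    note [measurable] = f g B lm_ball_subset_Esp[THEN subsetD, OF IntD1[OF h]]
    have "{t\<in>B. \<rho> \<le> \<bar>g t - f t\<bar>} \<subseteq> {t\<in>B. \<eta> \<le> \<bar>h t - f t\<bar>} \<union> {t\<in>B. \<eta> \<le> \<bar>h t - g t\<bar>}"
    proof (safe, rule ccontr)
      fix t assume "\<rho> \<le> \<bar>g t - f t\<bar>" "\<not> \<eta> \<le> \<bar>h t - g t\<bar>" "\<not> \<eta> \<le> \<bar>h t - f t\<bar>"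
      moreover have "\<bar>g t - f t\<bar> \<le> \<bar>h t - f t\<bar> + \<bar>h t - g t\<bar>" by linarith
      moreover have "2 * \<eta> \<le> \<rho>" by (simp add: \<eta>_def)
      ultimately show False by linarith
    qed
    then have "?m \<le> measure M {t\<in>B. \<eta> \<le> \<bar>h t - f t\<bar>} + measure M {t\<in>B. \<eta> \<le> \<bar>h t - g t\<bar>}"
      by (rule measure_le_Un_fmeasurable) (auto intro: fmeasurableI2[OF B])
    also have "\<dots> < \<eta> + \<eta>"
      using h by (intro add_strict_mono) (auto simp: lm_ball_def)
    also have "\<dots> \<le> ?m" by (simp add: \<eta>_def)
    finally show False by simp
  qed
  moreover obtain U where "openin (lm_topology M) U" "f \<in> U" "U \<subseteq> lm_ball M B \<eta> f"
    using open_subset_lm_ball[OF f B \<open>\<eta> > 0\<close>] by blast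
  moreover obtain V where "openin (lm_topology M) V" "g \<in> V" "V \<subseteq> lm_ball M B \<eta> g"
    using open_subset_lm_ball[OF g B \<open>\<eta> > 0\<close>] by blast
  ultimately show ?thesis by blast
qed

lemma openin_lm_topology_aeq:
  assumes "openin (lm_topology M) U" "f \<in> U" "g \<in> Esp M" "aeq M f g"
  shows "g \<in> U"
proof -
  obtain B e where B: "B \<in> fmeasurable M" and "e > 0" and U: "lm_ball M B e f \<subseteq> U"
    using assms(1,2) unfolding openin_lm_topology by blast
  have [measurable]: "f \<in> Esp M" using assms(1,2) unfolding openin_lm_topology by blast
  note [measurable] = B \<open>g \<in> Esp M\<close>
  have "AE t in M. t \<notin> {t\<in>B. e \<le> \<bar>g t - f t\<bar>}"
    using \<open>aeq M f g\<close> unfolding aeq_def by (rule eventually_mono) (use \<open>e > 0\<close> in auto)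
  then have "measure M {t\<in>B. e \<le> \<bar>g t - f t\<bar>} = 0"
    by (subst fmeasurable_measure_eq_0_iff) (auto intro: fmeasurableI2[OF B])
  with \<open>e > 0\<close> \<open>g \<in> Esp M\<close> U show ?thesis by (auto simp: lm_ball_def)
qed

lemma continuous_map_into_lm_topology:
  assumes "\<And>x. x \<in> topspace X \<Longrightarrow> F x \<in> Esp M"
    and "\<And>x B e. x \<in> topspace X \<Longrightarrow> B \<in> fmeasurable M \<Longrightarrow> e > 0 \<Longrightarrow>
           \<exists>U. openin X U \<and> x \<in> U \<and> F ` U \<subseteq> lm_ball M B e (F x)"
  shows "continuous_map X (lm_topology M) F"
  unfolding continuous_map_def topspace_lm_topology
proof (intro conjI allI impI)
  show "F \<in> topspace X \<rightarrow> Esp M" using assms(1) by blast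
  fix W assume W: "openin (lm_topology M) W"
  show "openin X {x \<in> topspace X. F x \<in> W}"
  proof (subst openin_subopen, intro ballI)
    fix x assume x: "x \<in> {x \<in> topspace X. F x \<in> W}"
    then obtain B e where B: "B \<in> fmeasurable M" "e > 0" and ball: "lm_ball M B e (F x) \<subseteq> W"
      using W unfolding openin_lm_topology by blast
    obtain U where U: "openin X U" "x \<in> U" "F ` U \<subseteq> lm_ball M B e (F x)"
      using assms(2)[OF _ B] x by blast
    have "U \<subseteq> topspace X" by (rule openin_subset[OF U(1)])
    moreover have "F u \<in> W" if "u \<in> U" for u
      using U(3) ball that by blast
    ultimately have "U \<subseteq> {x \<in> topspace X. F x \<in> W}" by blast
    with U(1,2) show "\<exists>T. openin X T \<and> x \<in> T \<and> T \<subseteq> {x \<in> topspace X. F x \<in> W}" by blast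
  qed
qed

lemma lm_ball_add:
  assumes "f' \<in> lm_ball M B a f" "g' \<in> lm_ball M B b g" "f \<in> Esp M" "g \<in> Esp M" "B \<in> fmeasurable M"
  shows "(\<lambda>t. f' t + g' t) \<in> lm_ball M B (a + b) (\<lambda>t. f t + g t)"
proof -
  have f': "f' \<in> Esp M" and g': "g' \<in> Esp M" using assms(1,2) by (auto simp: lm_ball_def)
  note [measurable] = f' g' assms(3-5)
  have "{t\<in>B. a + b \<le> \<bar>(f' t + g' t) - (f t + g t)\<bar>}
      \<subseteq> {t\<in>B. a \<le> \<bar>f' t - f t\<bar>} \<union> {t\<in>B. b \<le> \<bar>g' t - g t\<bar>}"
  proof (safe, rule ccontr)
    fix t assume "a + b \<le> \<bar>(f' t + g' t) - (f t + g t)\<bar>"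
      "\<not> b \<le> \<bar>g' t - g t\<bar>" "\<not> a \<le> \<bar>f' t - f t\<bar>"
    moreover have "\<bar>(f' t + g' t) - (f t + g t)\<bar> \<le> \<bar>f' t - f t\<bar> + \<bar>g' t - g t\<bar>" by linarith
    ultimately show False by linarith
  qed
  then have "measure M {t\<in>B. a + b \<le> \<bar>(f' t + g' t) - (f t + g t)\<bar>}
      \<le> measure M {t\<in>B. a \<le> \<bar>f' t - f t\<bar>} + measure M {t\<in>B. b \<le> \<bar>g' t - g t\<bar>}"
    by (rule measure_le_Un_fmeasurable) (auto intro: fmeasurableI2[OF assms(5)])
  also have "\<dots> < a + b"
    using assms(1,2) by (intro add_strict_mono) (auto simp: lm_ball_def)
  finally show ?thesis
    using Esp_add[OF f' g'] by (simp add: lm_ball_def)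
qed

lemma continuous_map_lm_topology_add:
  "continuous_map (prod_topology (lm_topology M) (lm_topology M)) (lm_topology M)
     (\<lambda>(f, g). \<lambda>t. f t + g t)"
proof (rule continuous_map_into_lm_topology; clarsimp simp: topspace_lm_topology)
  fix f g assume f: "f \<in> Esp M" and g: "g \<in> Esp M"
  then show "(\<lambda>t. f t + g t) \<in> Esp M" by (rule Esp_add)
  fix B and e :: real assume B: "B \<in> fmeasurable M" and "e > 0"
  then have "e / 2 > 0" by simp
  obtain V where V: "openin (lm_topology M) V" "f \<in> V" "V \<subseteq> lm_ball M B (e / 2) f"
    using open_subset_lm_ball[OF f B \<open>e / 2 > 0\<close>] by blast
  obtain W where W: "openin (lm_topology M) W" "g \<in> W" "W \<subseteq> lm_ball M B (e / 2) g"
    using open_subset_lm_ball[OF g B \<open>e / 2 > 0\<close>] by blast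
  have "(\<lambda>t. f' t + g' t) \<in> lm_ball M B e (\<lambda>t. f t + g t)" if "f' \<in> V" "g' \<in> W" for f' g'
    using lm_ball_add[of f' M B "e / 2" f g' "e / 2" g] that V W f g B by auto
  then show "\<exists>U. openin (prod_topology (lm_topology M) (lm_topology M)) U \<and> (f, g) \<in> U \<and>
      (\<lambda>(f, g) t. f t + g t) ` U \<subseteq> lm_ball M B e (\<lambda>t. f t + g t)"
    using V W by (intro exI[of _ "V \<times> W"]) (auto simp: openin_prod_Times_iff)
qed

lemma tendsto_measure_abs_ge_0:
  fixes f :: "'a \<Rightarrow> real"
  assumes [measurable]: "f \<in> borel_measurable M" "B \<in> fmeasurable M"
  shows "(\<lambda>n. measure M {t\<in>B. real n \<le> \<bar>f t\<bar>}) \<longlonglongrightarrow> 0"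
proof -
  define S where "S n = {t\<in>B. real n \<le> \<bar>f t\<bar>}" for n
  have S: "S n \<in> fmeasurable M" for n
    unfolding S_def by (rule fmeasurableI2[OF assms(2)]) auto
  have "decseq S" by (rule decseq_SucI) (auto simp: S_def)
  then have "(\<lambda>n. measure M (S n)) \<longlonglongrightarrow> measure M (\<Inter>n. S n)"
    using S by (intro Lim_measure_decseq) (auto simp: fmeasurableD2)
  moreover have "(\<Inter>n. S n) = {}"
  proof safe
    fix t assume t: "t \<in> (\<Inter>n. S n)"
    obtain n where "\<bar>f t\<bar> < real n" using reals_Archimedean2 by blast
    moreover have "t \<in> S n" using t by blast
    ultimately show "t \<in> {}" by (simp add: S_def)
  qed
  ultimately show ?thesis by (simp add: S_def)
qed

lemma lm_ball_cmult:
  assumes B: "B \<in> fmeasurable M" and f: "f \<in> Esp M" and f': "f' \<in> lm_ball M B \<eta> f"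
    and K: "measure M {t\<in>B. K \<le> \<bar>f t\<bar>} < e / 3" "0 \<le> K"
    and c': "\<bar>c' - c\<bar> < r" and r: "r * K \<le> e / 3" and \<eta>: "(\<bar>c\<bar> + r) * \<eta> \<le> e / 3" "\<eta> \<le> e / 3"
  shows "(\<lambda>t. c' * f' t) \<in> lm_ball M B e (\<lambda>t. c * f t)"
proof -
  have f'E: "f' \<in> Esp M" using f' by (simp add: lm_ball_def)
  note [measurable] = f f'E B
  have "e > 0" using K(1) measure_nonneg[of M "{t\<in>B. K \<le> \<bar>f t\<bar>}"] by linarith
  have "{t\<in>B. e \<le> \<bar>c' * f' t - c * f t\<bar>} \<subseteq> {t\<in>B. K \<le> \<bar>f t\<bar>} \<union> {t\<in>B. \<eta> \<le> \<bar>f' t - f t\<bar>}"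
  proof (safe, rule ccontr)
    fix t assume t: "e \<le> \<bar>c' * f' t - c * f t\<bar>" "\<not> \<eta> \<le> \<bar>f' t - f t\<bar>" "\<not> K \<le> \<bar>f t\<bar>"
    have "\<bar>c'\<bar> \<le> \<bar>c\<bar> + r" "0 \<le> r"
      using abs_triangle_ineq2[of c' c] c' by linarith+
    then have "\<bar>c'\<bar> * \<bar>f' t - f t\<bar> \<le> (\<bar>c\<bar> + r) * \<eta>"
      using t(2) by (intro mult_mono) auto
    moreover have "\<bar>c' - c\<bar> * \<bar>f t\<bar> \<le> r * K"
      using c' t(3) \<open>0 \<le> r\<close> by (intro mult_mono) auto
    moreover have "\<bar>c' * f' t - c * f t\<bar> \<le> \<bar>c'\<bar> * \<bar>f' t - f t\<bar> + \<bar>c' - c\<bar> * \<bar>f t\<bar>"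
    proof -
      have "c' * f' t - c * f t = c' * (f' t - f t) + (c' - c) * f t" by (simp add: algebra_simps)
      then show ?thesis by (metis abs_mult abs_triangle_ineq)
    qed
    ultimately show False using t(1) r \<eta> \<open>e > 0\<close> by linarith
  qed
  then have "measure M {t\<in>B. e \<le> \<bar>c' * f' t - c * f t\<bar>}
      \<le> measure M {t\<in>B. K \<le> \<bar>f t\<bar>} + measure M {t\<in>B. \<eta> \<le> \<bar>f' t - f t\<bar>}"
    by (rule measure_le_Un_fmeasurable) (auto intro: fmeasurableI2[OF B])
  also have "\<dots> < e / 3 + \<eta>"
    using K(1) f' by (intro add_strict_mono) (auto simp: lm_ball_def)
  also have "\<dots> < e" using \<eta>(2) \<open>e > 0\<close> by linarith
  finally show ?thesis
    using Esp_cmult[OF f'E] by (simp add: lm_ball_def)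
qed

lemma continuous_map_lm_topology_cmult:
  "continuous_map (prod_topology euclideanreal (lm_topology M)) (lm_topology M)
     (\<lambda>(c, f). \<lambda>t. c * f t)"
proof (rule continuous_map_into_lm_topology; clarsimp simp: topspace_lm_topology)
  fix c and f :: "'a \<Rightarrow> real" assume f: "f \<in> Esp M"
  then show "(\<lambda>t. c * f t) \<in> Esp M" by (rule Esp_cmult)
  fix B and e :: real assume B: "B \<in> fmeasurable M" and "e > 0"
  have "eventually (\<lambda>n. measure M {t\<in>B. real n \<le> \<bar>f t\<bar>} < e / 3) sequentially"
    using f \<open>e > 0\<close> by (intro order_tendstoD(2)[OF tendsto_measure_abs_ge_0[OF _ B]]) auto
  then obtain N where N: "measure M {t\<in>B. real N \<le> \<bar>f t\<bar>} < e / 3"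
    by (auto simp: eventually_sequentially)
  define K where "K = real N"
  define r where "r = e / (3 * (K + 1))"
  define \<eta> where "\<eta> = e / (3 * (\<bar>c\<bar> + r + 1))"
  have "K \<ge> 0" "r > 0" using \<open>e > 0\<close> by (auto simp: K_def r_def)
  then have "r * K \<le> e / 3"
    using \<open>e > 0\<close> by (simp add: r_def field_simps)
  have "\<eta> > 0" "(\<bar>c\<bar> + r) * \<eta> \<le> e / 3" "\<eta> \<le> e / 3"
    using \<open>e > 0\<close> \<open>r > 0\<close> by (auto simp: \<eta>_def field_simps)
  obtain V where V: "openin (lm_topology M) V" "f \<in> V" "V \<subseteq> lm_ball M B \<eta> f"
    using open_subset_lm_ball[OF f B \<open>\<eta> > 0\<close>] by blast
  have "(\<lambda>t. c' * f' t) \<in> lm_ball M B e (\<lambda>t. c * f t)" if "c' \<in> {c - r<..<c + r}" "f' \<in> V" for c' f'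
  proof (rule lm_ball_cmult[OF B f])
    show "f' \<in> lm_ball M B \<eta> f" using that V by blast
    show "\<bar>c' - c\<bar> < r" using that by auto
  qed (use N \<open>K \<ge> 0\<close> \<open>r * K \<le> e / 3\<close> \<open>(\<bar>c\<bar> + r) * \<eta> \<le> e / 3\<close> \<open>\<eta> \<le> e / 3\<close> in \<open>auto simp: K_def\<close>)
  moreover have "openin euclideanreal {c - r<..<c + r}" by simp
  ultimately show "\<exists>U. openin (prod_topology euclideanreal (lm_topology M)) U \<and> (c, f) \<in> U \<and>
      (\<lambda>(c, f) t. c * f t) ` U \<subseteq> lm_ball M B e (\<lambda>t. c * f t)"
    using V \<open>r > 0\<close> by (intro exI[of _ "{c - r<..<c + r} \<times> V"]) (auto simp: openin_prod_Times_iff)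
qed

lemma solid_lm_ball_zero:
  assumes B: "B \<in> fmeasurable M"
  shows "solid M (lm_ball M B e (\<lambda>t. 0))"
  unfolding solid_def
proof (intro conjI ballI impI lm_ball_subset_Esp)
  fix f g assume f: "f \<in> lm_ball M B e (\<lambda>t. 0)" and g: "g \<in> Esp M"
    and le: "ale M (\<lambda>t. \<bar>g t\<bar>) (\<lambda>t. \<bar>f t\<bar>)"
  note [measurable] = B g lm_ball_subset_Esp[THEN subsetD, OF f]
  have "measure M {t\<in>B. e \<le> \<bar>g t - 0\<bar>} \<le> measure M {t\<in>B. e \<le> \<bar>f t - 0\<bar>}"
  proof (rule measure_mono_AE_fmeasurable)
    show "AE t in M. t \<in> {t\<in>B. e \<le> \<bar>g t - 0\<bar>} \<longrightarrow> t \<in> {t\<in>B. e \<le> \<bar>f t - 0\<bar>}"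
      using le unfolding ale_def by (rule eventually_mono) auto
  qed (auto intro: fmeasurableI2[OF B])
  with f g show "g \<in> lm_ball M B e (\<lambda>t. 0)" by (simp add: lm_ball_def)
qed

lemma lm_topology_solid_zero_nbhd:
  assumes "zero_nbhd (lm_topology M) W"
  shows "\<exists>N. solid M N \<and> zero_nbhd (lm_topology M) N \<and> N \<subseteq> W"
proof -
  obtain U where U: "openin (lm_topology M) U" "(\<lambda>t. 0) \<in> U" "U \<subseteq> W"
    using assms unfolding zero_nbhd_def by blast
  then obtain B e where B: "B \<in> fmeasurable M" "e > 0" and "lm_ball M B e (\<lambda>t. 0) \<subseteq> U"
    unfolding openin_lm_topology by blast
  moreover obtain V where "openin (lm_topology M) V" "(\<lambda>t. 0) \<in> V" "V \<subseteq> lm_ball M B e (\<lambda>t. 0)"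
    using open_subset_lm_ball[OF Esp_zero B] by blast
  then have "zero_nbhd (lm_topology M) (lm_ball M B e (\<lambda>t. 0))"
    unfolding zero_nbhd_def by blast
  ultimately show ?thesis using solid_lm_ball_zero[OF B(1)] U(3) by blast
qed

lemma solid_linear_top_lm_topology: "solid_linear_top M (lm_topology M)"
  unfolding solid_linear_top_def
proof (intro conjI allI ballI impI; (elim conjE)?)
  show "topspace (lm_topology M) = Esp M" by (rule topspace_lm_topology)
  show "g \<in> U" if "openin (lm_topology M) U" "f \<in> U" "g \<in> Esp M" "aeq M f g" for U f g
    using that by (rule openin_lm_topology_aeq)
  show "\<exists>U V. openin (lm_topology M) U \<and> openin (lm_topology M) V \<and> f \<in> U \<and> g \<in> V \<and> U \<inter> V = {}"
    if "f \<in> Esp M" "g \<in> Esp M" "\<not> aeq M f g" for f g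
    using that by (rule lm_topology_separates)
  show "\<exists>N. solid M N \<and> zero_nbhd (lm_topology M) N \<and> N \<subseteq> W" if "zero_nbhd (lm_topology M) W" for W
    using that by (rule lm_topology_solid_zero_nbhd)
qed (fact continuous_map_lm_topology_add continuous_map_lm_topology_cmult)+

section \<open>The countable sup property\<close>

lemma countable_maximizer:
  fixes v :: "'b set \<Rightarrow> real"
  assumes bounded: "\<And>C. C \<subseteq> F \<Longrightarrow> countable C \<Longrightarrow> v C \<le> K"
    and mono: "\<And>C C'. C \<subseteq> C' \<Longrightarrow> C' \<subseteq> F \<Longrightarrow> countable C' \<Longrightarrow> v C \<le> v C'"
  shows "\<exists>C\<subseteq>F. countable C \<and> (\<forall>C'\<subseteq>F. countable C' \<longrightarrow> v C' \<le> v C)"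
proof -
  define CC where "CC = {C. C \<subseteq> F \<and> countable C}"
  have "CC \<noteq> {}" by (auto simp: CC_def)
  have bdd: "bdd_above (v ` CC)" using bounded by (auto simp: CC_def bdd_above_def)
  define V where "V = (SUP C\<in>CC. v C)"
  have "\<exists>C\<in>CC. V - inverse (Suc n) < v C" for n
    unfolding V_def by (subst less_cSUP_iff[OF \<open>CC \<noteq> {}\<close> bdd, symmetric]) simp
  then obtain Cs where Cs: "\<And>n. Cs n \<in> CC" "\<And>n. V - inverse (Suc n) < v (Cs n)" by metis
  define C where "C = (\<Union>n. Cs n)"
  have C: "C \<in> CC" using Cs(1) by (auto simp: CC_def C_def)
  have "V \<le> v C"
  proof (rule field_le_epsilon)
    fix e :: real assume "e > 0"
    then obtain n where "inverse (Suc n) < e" using reals_Archimedean by blast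
    moreover have "v (Cs n) \<le> v C"
      using C by (intro mono) (auto simp: CC_def C_def)
    ultimately show "V \<le> v C + e" using Cs(2)[of n] by linarith
  qed
  have upper: "v C' \<le> V" if "C' \<subseteq> F" "countable C'" for C'
  proof -
    have "C' \<in> CC" using that by (simp add: CC_def)
    then show ?thesis unfolding V_def using bdd by (rule cSUP_upper)
  qed
  have "v C' \<le> v C" if "C' \<subseteq> F" "countable C'" for C'
    using upper[OF that] \<open>V \<le> v C\<close> by linarith
  with C show ?thesis by (auto simp: CC_def)
qed

definition arctan_sup :: "('a \<Rightarrow> real) set \<Rightarrow> 'a \<Rightarrow> real" where
  "arctan_sup C t = (SUP f\<in>C. arctan (f t))"

lemma bdd_above_arctan: "bdd_above ((\<lambda>f. arctan (f t)) ` C)"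
  using arctan_ubound by (intro bdd_aboveI2[where M = "pi / 2"]) (simp add: less_imp_le)

lemma arctan_le_arctan_sup:
  assumes "f \<in> C" shows "arctan (f t) \<le> arctan_sup C t"
  unfolding arctan_sup_def by (rule cSUP_upper[OF assms bdd_above_arctan])

lemma arctan_sup_least: "C \<noteq> {} \<Longrightarrow> (\<And>f. f \<in> C \<Longrightarrow> arctan (f t) \<le> y) \<Longrightarrow> arctan_sup C t \<le> y"
  unfolding arctan_sup_def by (rule cSUP_least) auto

lemma arctan_sup_mono: "C \<noteq> {} \<Longrightarrow> C \<subseteq> C' \<Longrightarrow> arctan_sup C t \<le> arctan_sup C' t"
  by (intro arctan_sup_least arctan_le_arctan_sup) auto

lemma abs_arctan_sup_le:
  assumes "C \<noteq> {}" shows "\<bar>arctan_sup C t\<bar> \<le> pi / 2"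
proof -
  obtain f where "f \<in> C" using assms by blast
  then have "- (pi / 2) \<le> arctan_sup C t"
    using arctan_le_arctan_sup[of f C t] arctan_lbound[of "f t"] by linarith
  moreover have "arctan_sup C t \<le> pi / 2"
    using assms arctan_ubound by (intro arctan_sup_least) (auto simp: less_imp_le)
  ultimately show ?thesis by (simp add: abs_le_iff)
qed

lemma integrable_indicator_arctan_sup:
  assumes "C \<noteq> {}" "countable C" "C \<subseteq> borel_measurable M" "B \<in> fmeasurable M"
  shows "integrable M (\<lambda>t. indicator B t * arctan_sup C t)"
proof (rule integrableI_bounded_set[where A = B and B = "pi / 2"])
  have "arctan_sup C \<in> borel_measurable M"
    unfolding arctan_sup_def[abs_def]
  proof (rule borel_measurable_cSUP[OF \<open>countable C\<close> _ bdd_above_arctan])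
    fix f assume "f \<in> C"
    then have [measurable]: "f \<in> borel_measurable M" using assms(3) by blast
    show "(\<lambda>t. arctan (f t)) \<in> borel_measurable M" by measurable
  qed
  then show "(\<lambda>t. indicator B t * arctan_sup C t) \<in> borel_measurable M"
    using assms(4) by measurable
qed (use assms(4) abs_arctan_sup_le[OF assms(1)] in \<open>auto simp: fmeasurable_def indicator_def\<close>)

text \<open>Taking arctan makes all suprema bounded, hence integrable on B; maximality of the integral
  then forces the countable subfamily to dominate every member a.e. on B.\<close>

lemma countable_arctan_sup_dominates:
  fixes F :: "('a \<Rightarrow> real) set"
  assumes Fm: "F \<subseteq> borel_measurable M" and B: "B \<in> fmeasurable M" and "f0 \<in> F"
  shows "\<exists>C\<subseteq>F. countable C \<and>
    (\<forall>g\<in>F. AE t in M. t \<in> B \<longrightarrow> arctan (g t) \<le> arctan_sup (insert f0 C) t)"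
proof -
  define v where "v C = (\<integral>t. indicator B t * arctan_sup (insert f0 C) t \<partial>M)" for C
  have int: "integrable M (\<lambda>t. indicator B t * arctan_sup (insert f0 C) t)"
    if "C \<subseteq> F" "countable C" for C
    using that Fm \<open>f0 \<in> F\<close> B by (intro integrable_indicator_arctan_sup) auto
  have v_bounded: "v C \<le> \<integral>t. indicator B t * (pi / 2) \<partial>M" if "C \<subseteq> F" "countable C" for C
    unfolding v_def
  proof (rule integral_mono[OF int[OF that]])
    show "integrable M (\<lambda>t. indicator B t * (pi / 2))"
      using B by (intro integrable_mult_left integrable_real_indicator) (auto simp: fmeasurable_def)
    show "indicator B t * arctan_sup (insert f0 C) t \<le> indicator B t * (pi / 2)" for t
      using abs_arctan_sup_le[of "insert f0 C" t] by (intro mult_left_mono) (auto simp: abs_le_iff)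
  qed
  have v_mono: "v C \<le> v C'" if "C \<subseteq> C'" "C' \<subseteq> F" "countable C'" for C C'
  proof -
    have "C \<subseteq> F" "countable C" using that countable_subset[OF that(1,3)] by auto
    then have "integrable M (\<lambda>t. indicator B t * arctan_sup (insert f0 C) t)" by (rule int)
    moreover have "integrable M (\<lambda>t. indicator B t * arctan_sup (insert f0 C') t)"
      using that(2,3) by (rule int)
    moreover have "indicator B t * arctan_sup (insert f0 C) t \<le> indicator B t * arctan_sup (insert f0 C') t"
      for t using that(1) by (intro mult_left_mono arctan_sup_mono) auto
    ultimately show ?thesis unfolding v_def by (rule integral_mono)
  qed
  obtain C where C: "C \<subseteq> F" "countable C" and C_max: "\<forall>C'\<subseteq>F. countable C' \<longrightarrow> v C' \<le> v C"
    using countable_maximizer[where F = F and v = v, OF v_bounded v_mono] by blast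
  have dominated: "AE t in M. t \<in> B \<longrightarrow> arctan (g t) \<le> arctan_sup (insert f0 C) t"
    if g: "g \<in> F" for g
  proof -
    have C': "insert g C \<subseteq> F" "countable (insert g C)" using g C by auto
    have "v C = v (insert g C)"
      using C C' by (intro antisym v_mono C_max[rule_format]) auto
    then have "AE t in M. indicator B t * arctan_sup (insert f0 C) t =
        indicator B t * arctan_sup (insert f0 (insert g C)) t"
      unfolding v_def using int[OF C] int[OF C']
      by (intro integral_ineq_eq_0_then_AE AE_I2 mult_left_mono arctan_sup_mono) auto
    then show ?thesis
      by (rule eventually_mono)
        (use arctan_le_arctan_sup[of g "insert f0 (insert g C)"] in \<open>auto simp: indicator_def\<close>)
  qed
  with C show ?thesis by blast
qed

lemma countable_subfamily_bounds_on_fmeasurable: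
  fixes F :: "('a \<Rightarrow> real) set"
  assumes Fm: "F \<subseteq> borel_measurable M" and B: "B \<in> fmeasurable M"
  obtains F0 where "F0 \<subseteq> F" "countable F0"
    "\<forall>g\<in>F. \<forall>u. (\<forall>f\<in>F0. AE t in M. f t \<le> u t) \<longrightarrow> (AE t in M. t \<in> B \<longrightarrow> g t \<le> u t)"
proof (cases "F = {}")
  case False
  then obtain f0 where f0: "f0 \<in> F" by blast
  obtain C where C: "C \<subseteq> F" "countable C"
    and dominated: "\<forall>g\<in>F. AE t in M. t \<in> B \<longrightarrow> arctan (g t) \<le> arctan_sup (insert f0 C) t"
    using countable_arctan_sup_dominates[OF Fm B f0] by blast
  have "AE t in M. t \<in> B \<longrightarrow> g t \<le> u t"
    if g: "g \<in> F" and u: "\<forall>f\<in>insert f0 C. AE t in M. f t \<le> u t" for g u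
  proof -
    have "AE t in M. \<forall>f\<in>insert f0 C. f t \<le> u t"
      using u C(2) by (subst AE_ball_countable) auto
    with bspec[OF dominated g] show ?thesis
    proof eventually_elim
      case (elim t)
      have "arctan_sup (insert f0 C) t \<le> arctan (u t)"
        using elim(2) by (intro arctan_sup_least) (auto simp: arctan_le_iff)
      with elim(1) show ?case by (meson arctan_le_iff order_trans)
    qed
  qed
  moreover have "insert f0 C \<subseteq> F" "countable (insert f0 C)" using f0 C by auto
  ultimately show ?thesis using that by blast
next
  case True
  show ?thesis by (rule that[of "{}"]) (use True in auto)
qed

lemma countable_subfamily_bounds:
  fixes F :: "('a \<Rightarrow> real) set" and B :: "nat \<Rightarrow> 'a set"
  assumes Fm: "F \<subseteq> borel_measurable M" and B: "\<And>n. B n \<in> fmeasurable M"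
  obtains F0 where "F0 \<subseteq> F" "countable F0"
    "\<forall>g\<in>F. \<forall>u. (\<forall>f\<in>F0. AE t in M. f t \<le> u t) \<longrightarrow>
       (AE t in M. t \<in> (\<Union>n. B n) \<longrightarrow> g t \<le> u t)"
proof -
  let ?bounds = "\<lambda>G n. \<forall>g\<in>F. \<forall>u. (\<forall>f\<in>G. AE t in M. f t \<le> u t) \<longrightarrow>
      (AE t in M. t \<in> B n \<longrightarrow> g t \<le> u t)"
  have "\<forall>n. \<exists>G. G \<subseteq> F \<and> countable G \<and> ?bounds G n"
  proof
    fix n show "\<exists>G. G \<subseteq> F \<and> countable G \<and> ?bounds G n"
      by (rule countable_subfamily_bounds_on_fmeasurable[OF Fm B[of n]]) blast
  qed
  then obtain G where "\<forall>n. G n \<subseteq> F \<and> countable (G n) \<and> ?bounds (G n) n"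
    using choice[of "\<lambda>n G. G \<subseteq> F \<and> countable G \<and> ?bounds G n"] by blast
  then have G: "\<And>n. G n \<subseteq> F" "\<And>n. countable (G n)" "\<And>n. ?bounds (G n) n"
    by simp_all
  show ?thesis
  proof (rule that[of "\<Union>n. G n"]; (intro ballI allI impI)?)
    show "(\<Union>n. G n) \<subseteq> F" "countable (\<Union>n. G n)" using G(1,2) by auto
    fix g u assume g: "g \<in> F" and u: "\<forall>f\<in>(\<Union>n. G n). AE t in M. f t \<le> u t"
    have "AE t in M. t \<in> B n \<longrightarrow> g t \<le> u t" for n
      using G(3)[of n] g u by auto
    then have "AE t in M. \<forall>n. t \<in> B n \<longrightarrow> g t \<le> u t"
      unfolding AE_all_countable by blast
    then show "AE t in M. t \<in> (\<Union>n. B n) \<longrightarrow> g t \<le> u t"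
      by (rule eventually_mono) auto
  qed
qed

lemma countable_sup_property_Esp: "countable_sup_property M"
  unfolding countable_sup_property_def
proof (intro allI impI, elim conjE)
  fix S s assume S: "S \<subseteq> Esp M" and sup: "is_sup_E M S s"
  show "\<exists>S0\<subseteq>S. countable S0 \<and> is_sup_E M S0 s"
  proof (cases "S = {}")
    case True
    then show ?thesis using sup by (intro exI[of _ "{}"]) auto
  next
    case False
    then obtain f1 where f1: "f1 \<in> S" by blast
    have s: "s \<in> Esp M" using sup by (simp add: is_sup_E_def)
    have f1E: "f1 \<in> Esp M" using f1 S by blast
    define B where "B n = support_cover M s n \<union> support_cover M f1 n" for n
    have Bf: "B n \<in> fmeasurable M" for n
      unfolding B_def using s f1E by (intro fmeasurable.Un support_cover_fmeasurable)
    have Sm: "S \<subseteq> borel_measurable M" using S by auto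
    obtain G where G: "G \<subseteq> S" "countable G"
      and bound: "\<forall>g\<in>S. \<forall>u. (\<forall>f\<in>G. AE t in M. f t \<le> u t) \<longrightarrow>
        (AE t in M. t \<in> (\<Union>n. B n) \<longrightarrow> g t \<le> u t)"
      by (rule countable_subfamily_bounds[OF Sm Bf])
    have "is_sup_E M (insert f1 G) s"
      unfolding is_sup_E_def
    proof (intro conjI ballI impI)
      show "s \<in> Esp M" by (fact s)
      show "ale M f s" if "f \<in> insert f1 G" for f
        using that f1 G sup by (auto simp: is_sup_E_def)
      fix u assume "u \<in> Esp M" and u: "\<forall>f\<in>insert f1 G. ale M f u"
      have "ale M g u" if g: "g \<in> S" for g
      proof -
        have "AE t in M. t \<in> (\<Union>n. B n) \<longrightarrow> g t \<le> u t"
          using bound g u by (simp add: ale_def)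
        moreover have "AE t in M. g t \<le> s t" using sup g by (simp add: is_sup_E_def ale_def)
        moreover have "AE t in M. f1 t \<le> u t" using u by (simp add: ale_def)
        moreover note AE_support_cover[OF s] AE_support_cover[OF f1E]
        ultimately show ?thesis
          unfolding ale_def by eventually_elim (force simp: B_def)
      qed
      then show "ale M s u" using sup \<open>u \<in> Esp M\<close> by (simp add: is_sup_E_def)
    qed
    then show ?thesis using G f1 by (intro exI[of _ "insert f1 G"]) auto
  qed
qed

lemma countable_subfamily_lower_bounds_on_fmeasurable:
  fixes D :: "('a \<Rightarrow> real) set"
  assumes "D \<subseteq> borel_measurable M" "B \<in> fmeasurable M"
  obtains D0 where "D0 \<subseteq> D" "countable D0"
    "\<forall>g\<in>D. \<forall>z. (\<forall>f\<in>D0. AE t in M. z t \<le> f t) \<longrightarrow> (AE t in M. t \<in> B \<longrightarrow> z t \<le> g t)"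
proof -
  let ?neg = "\<lambda>f t. - f t :: real"
  have "?neg ` D \<subseteq> borel_measurable M" using assms(1) by auto
  then obtain F0 where F0: "F0 \<subseteq> ?neg ` D" "countable F0"
    and bound: "\<forall>g\<in>?neg ` D. \<forall>u. (\<forall>f\<in>F0. AE t in M. f t \<le> u t) \<longrightarrow>
      (AE t in M. t \<in> B \<longrightarrow> g t \<le> u t)"
    by (rule countable_subfamily_bounds_on_fmeasurable[OF _ assms(2)])
  obtain D0 where D0: "D0 \<subseteq> D" "countable D0" "F0 = ?neg ` D0"
    using countable_subset_image[of F0 ?neg D] F0 by blast
  show ?thesis
  proof (rule that[OF D0(1,2)], intro ballI allI impI)
    fix g z assume "g \<in> D" and z: "\<forall>f\<in>D0. AE t in M. z t \<le> f t"
    have "(\<lambda>t. - g t) \<in> ?neg ` D" using \<open>g \<in> D\<close> by blast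
    with bound have imp: "\<forall>u. (\<forall>f\<in>F0. AE t in M. f t \<le> u t) \<longrightarrow>
        (AE t in M. t \<in> B \<longrightarrow> - g t \<le> u t)"
      by (rule bspec)
    have "\<forall>f\<in>F0. AE t in M. f t \<le> - z t" using z D0(3) by auto
    with imp[THEN spec, of "\<lambda>t. - z t"] show "AE t in M. t \<in> B \<longrightarrow> z t \<le> g t" by simp
  qed
qed

section \<open>Order convergence implies local convergence in measure\<close>

lemma ale_trans: "ale M f g \<Longrightarrow> ale M g h \<Longrightarrow> ale M f h"
  unfolding ale_def by (rule eventually_elim2) auto

lemma dir_inf_zero_finite_lower_bound:
  assumes D: "dir_inf_zero M D" and "finite D'" "D' \<subseteq> D"
  shows "\<exists>d\<in>D. \<forall>d'\<in>D'. ale M d d'"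
  using \<open>finite D'\<close> \<open>D' \<subseteq> D\<close>
proof (induction D' rule: finite_induct)
  case empty
  then show ?case using D by (auto simp: dir_inf_zero_def)
next
  case (insert x D')
  then obtain d where d: "d \<in> D" "\<forall>d'\<in>D'. ale M d d'" by auto
  moreover have "x \<in> D" using insert.prems by simp
  ultimately obtain d3 where "d3 \<in> D" "ale M d3 d" "ale M d3 x"
    using D unfolding dir_inf_zero_def by meson
  then show ?case using d(2) ale_trans by blast
qed

lemma dir_inf_zero_AE_below:
  assumes D: "dir_inf_zero M D" and B: "B \<in> fmeasurable M" and "e > 0"
  obtains dd :: "nat \<Rightarrow> 'a \<Rightarrow> real" where "range dd \<subseteq> D" "AE t in M. t \<in> B \<longrightarrow> (\<exists>k. dd k t < e)"
proof -
  have DE: "D \<subseteq> Esp M" and "D \<noteq> {}" and pos: "\<And>d. d \<in> D \<Longrightarrow> ale M (\<lambda>t. 0) d"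
    and inf: "\<And>z. z \<in> Esp M \<Longrightarrow> \<forall>d\<in>D. ale M z d \<Longrightarrow> ale M z (\<lambda>t. 0)"
    using D unfolding dir_inf_zero_def by auto
  then have "D \<subseteq> borel_measurable M" by auto
  then obtain D0 where D0: "D0 \<subseteq> D" "countable D0"
    and bound: "\<forall>g\<in>D. \<forall>z. (\<forall>f\<in>D0. AE t in M. z t \<le> f t) \<longrightarrow> (AE t in M. t \<in> B \<longrightarrow> z t \<le> g t)"
    by (rule countable_subfamily_lower_bounds_on_fmeasurable[OF _ B])
  obtain d0 where "d0 \<in> D" using \<open>D \<noteq> {}\<close> by blast
  define dd where "dd = from_nat_into (insert d0 D0)"
  have range_dd: "range dd = insert d0 D0"
    unfolding dd_def using D0(2) by (intro range_from_nat_into) auto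
  have ddD: "dd k \<in> D" for k
  proof -
    have "dd k \<in> insert d0 D0" unfolding range_dd[symmetric] by simp
    then show ?thesis using \<open>d0 \<in> D\<close> D0(1) by auto
  qed
  then have dd: "dd k \<in> Esp M" for k using DE by blast
  note [measurable] = dd B
  \<comment> \<open>e times the indicator of N lies below D in E, hence below 0, so N is null\<close>
  define N where "N = {t\<in>B. \<forall>k. e \<le> dd k t}"
  define z where "z t = e * indicator N t" for t
  have "z \<in> borel_measurable M" unfolding z_def N_def by measurable
  then have z: "z \<in> Esp M"
    by (rule Esp_vanishing_outside[OF _ B]) (auto simp: z_def N_def)
  have "ale M z d" if "d \<in> D" for d
  proof -
    have z_dd: "AE t in M. z t \<le> dd k t" for k
      using pos[OF ddD[of k]] unfolding ale_def
      by (rule eventually_mono) (auto simp: z_def N_def indicator_def)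
    have "\<forall>f\<in>D0. AE t in M. z t \<le> f t"
    proof
      fix f assume "f \<in> D0"
      then obtain k where "f = dd k" using range_dd by (metis image_iff insertCI)
      then show "AE t in M. z t \<le> f t" using z_dd by simp
    qed
    then have "AE t in M. t \<in> B \<longrightarrow> z t \<le> d t" using bound that by blast
    with pos[OF that] show ?thesis unfolding ale_def
      by eventually_elim (auto simp: z_def N_def indicator_def)
  qed
  then have "ale M z (\<lambda>t. 0)" using inf[OF z] by blast
  then have "AE t in M. t \<notin> N"
    unfolding ale_def by (rule eventually_mono) (use \<open>e > 0\<close> in \<open>auto simp: z_def\<close>)
  then have "AE t in M. t \<in> B \<longrightarrow> (\<exists>k. dd k t < e)"
    by (rule eventually_mono) (auto simp: N_def not_le)
  with ddD show ?thesis using that by blast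
qed

lemma dir_inf_zero_small:
  assumes D: "dir_inf_zero M D" and B: "B \<in> fmeasurable M" and "e > 0" "\<delta> > 0"
  shows "\<exists>d\<in>D. measure M {t\<in>B. e \<le> d t} < \<delta>"
proof -
  obtain dd :: "nat \<Rightarrow> 'a \<Rightarrow> real"
    where dd: "range dd \<subseteq> D" and below: "AE t in M. t \<in> B \<longrightarrow> (\<exists>k. dd k t < e)"
    by (rule dir_inf_zero_AE_below[OF D B \<open>e > 0\<close>])
  have DE: "D \<subseteq> Esp M" using D by (simp add: dir_inf_zero_def)
  have [measurable]: "dd k \<in> Esp M" for k using dd DE by blast
  note [measurable] = B
  define E where "E n = {t\<in>B. \<forall>k\<le>n. e \<le> dd k t}" for n
  have E: "E n \<in> fmeasurable M" for n
    unfolding E_def by (rule fmeasurableI2[OF B]) auto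
  have "decseq E" by (rule decseq_SucI) (auto simp: E_def)
  then have "(\<lambda>n. measure M (E n)) \<longlonglongrightarrow> measure M (\<Inter>n. E n)"
    using E by (intro Lim_measure_decseq) (auto simp: fmeasurableD2)
  moreover have "measure M (\<Inter>n. E n) = 0"
  proof -
    have "(\<Inter>n. E n) \<in> fmeasurable M"
      using E by (intro fmeasurableI2[OF E[of 0]]) auto
    moreover have "AE t in M. t \<notin> (\<Inter>n. E n)"
      using below by (rule eventually_mono) (auto simp: E_def not_le)
    ultimately show ?thesis by (simp add: fmeasurable_measure_eq_0_iff)
  qed
  ultimately obtain n where n: "measure M (E n) < \<delta>"
    using order_tendstoD(2)[of _ 0 sequentially \<delta>] \<open>\<delta> > 0\<close> by (auto simp: eventually_sequentially)
  obtain d where "d \<in> D" and d: "\<forall>k\<in>{..n}. ale M d (dd k)"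
    using dir_inf_zero_finite_lower_bound[OF D, of "dd ` {..n}"] dd by auto
  have [measurable]: "d \<in> Esp M" using \<open>d \<in> D\<close> DE by blast
  have "AE t in M. \<forall>k\<in>{..n}. d t \<le> dd k t"
    using d by (intro AE_finite_allI) (auto simp: ale_def)
  then have "AE t in M. t \<in> {t\<in>B. e \<le> d t} \<longrightarrow> t \<in> E n"
    by (rule eventually_mono) (auto simp: E_def intro: order_trans)
  then have "measure M {t\<in>B. e \<le> d t} \<le> measure M (E n)"
    using E by (intro measure_mono_AE_fmeasurable) auto
  with n \<open>d \<in> D\<close> show ?thesis by force
qed

lemma uo_conv_imp_lm_conv:
  assumes x: "\<forall>\<alpha>\<in>A. x \<alpha> \<in> Esp M" and f: "f \<in> Esp M" and uo: "uo_conv M A le x f"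
  shows "lm_conv M A le x f"
  unfolding lm_conv_def
proof (intro allI impI ballI)
  fix \<epsilon> \<delta> :: real and B assume "\<epsilon> > 0" "B \<in> sets M" "emeasure M B < \<infinity>" "\<delta> > 0"
  then have B: "B \<in> fmeasurable M" by (simp add: fmeasurableI)
  note [measurable] = f B
  have "indicator B \<in> Esp M"
    by (rule Esp_vanishing_outside[OF _ B]) auto
  then obtain D where D: "dir_inf_zero M D"
    and below: "\<forall>d\<in>D. net_ev A le (\<lambda>\<alpha>. ale M (\<lambda>t. \<bar>min (\<bar>x \<alpha> t - f t\<bar>) (\<bar>indicator B t\<bar>) - 0\<bar>) d)"
    using uo unfolding uo_conv_def order_conv_def by blast
  have "min \<epsilon> 1 > 0" using \<open>\<epsilon> > 0\<close> by simp
  then obtain d where "d \<in> D" and d: "measure M {t\<in>B. min \<epsilon> 1 \<le> d t} < \<delta>"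
    using dir_inf_zero_small[OF D B _ \<open>\<delta> > 0\<close>] by blast
  have [measurable]: "d \<in> Esp M" using D \<open>d \<in> D\<close> by (auto simp: dir_inf_zero_def)
  show "net_ev A le (\<lambda>\<alpha>. measure M {t\<in>B. \<epsilon> \<le> \<bar>x \<alpha> t - f t\<bar>} < \<delta>)"
    using below \<open>d \<in> D\<close>
  proof (elim ballE net_ev_mono)
    fix a assume "a \<in> A" and a: "ale M (\<lambda>t. \<bar>min (\<bar>x a t - f t\<bar>) (\<bar>indicator B t\<bar>) - 0\<bar>) d"
    have [measurable]: "x a \<in> Esp M" using x \<open>a \<in> A\<close> by blast
    have "AE t in M. t \<in> {t\<in>B. \<epsilon> \<le> \<bar>x a t - f t\<bar>} \<longrightarrow> t \<in> {t\<in>B. min \<epsilon> 1 \<le> d t}"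
      using a unfolding ale_def by (rule eventually_mono) auto
    then have "measure M {t\<in>B. \<epsilon> \<le> \<bar>x a t - f t\<bar>} \<le> measure M {t\<in>B. min \<epsilon> 1 \<le> d t}"
      by (rule measure_mono_AE_fmeasurable) (auto intro: fmeasurableI2[OF B])
    with d show "measure M {t\<in>B. \<epsilon> \<le> \<bar>x a t - f t\<bar>} < \<delta>" by linarith
  qed simp
qed

section \<open>Embedded sequences and almost everywhere convergence\<close>

lemma AE_tendsto_imp_lm_conv:
  fixes y :: "nat \<Rightarrow> 'a \<Rightarrow> real"
  assumes [measurable]: "\<And>n. y n \<in> borel_measurable M" "g \<in> borel_measurable M"
    and conv: "AE t in M. (\<lambda>n. y n t) \<longlonglongrightarrow> g t"
  shows "lm_conv M UNIV (\<le>) y g"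
  unfolding lm_conv_def
proof (intro allI impI ballI)
  fix \<epsilon> \<delta> :: real and B assume "\<epsilon> > 0" "B \<in> sets M" "emeasure M B < \<infinity>" "\<delta> > 0"
  then have B[measurable]: "B \<in> fmeasurable M" by (simp add: fmeasurableI)
  define G where "G n = {t\<in>B. \<exists>k\<ge>n. \<epsilon> \<le> \<bar>y k t - g t\<bar>}" for n
  have G: "G n \<in> fmeasurable M" for n
    unfolding G_def by (rule fmeasurableI2[OF B]) auto
  have "decseq G" by (rule decseq_SucI) (auto simp: G_def intro: Suc_leD)
  then have "(\<lambda>n. measure M (G n)) \<longlonglongrightarrow> measure M (\<Inter>n. G n)"
    using G by (intro Lim_measure_decseq) (auto simp: fmeasurableD2)
  moreover have "measure M (\<Inter>n. G n) = 0"
  proof -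
    have "(\<Inter>n. G n) \<in> fmeasurable M"
      using G by (intro fmeasurableI2[OF G[of 0]]) auto
    moreover have "AE t in M. t \<notin> (\<Inter>n. G n)"
      using conv
    proof (rule eventually_mono)
      fix t assume "(\<lambda>n. y n t) \<longlonglongrightarrow> g t"
      then obtain N where "\<forall>n\<ge>N. dist (y n t) (g t) < \<epsilon>"
        using \<open>\<epsilon> > 0\<close> by (auto simp: lim_sequentially)
      then have "t \<notin> G N" by (force simp: G_def dist_real_def)
      then show "t \<notin> (\<Inter>n. G n)" by blast
    qed
    ultimately show ?thesis by (simp add: fmeasurable_measure_eq_0_iff)
  qed
  ultimately have "eventually (\<lambda>n. measure M (G n) < \<delta>) sequentially"
    using \<open>\<delta> > 0\<close> by (auto intro: order_tendstoD(2))
  then obtain N where N: "\<And>n. n \<ge> N \<Longrightarrow> measure M (G n) < \<delta>"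
    by (auto simp: eventually_sequentially)
  have "measure M {t\<in>B. \<epsilon> \<le> \<bar>y n t - g t\<bar>} < \<delta>" if "n \<ge> N" for n
  proof -
    have "measure M {t\<in>B. \<epsilon> \<le> \<bar>y n t - g t\<bar>} \<le> measure M (G n)"
      using G by (intro measure_mono_fmeasurable) (auto simp: G_def)
    with N[OF that] show ?thesis by linarith
  qed
  then show "net_ev UNIV (\<le>) (\<lambda>n. measure M {t\<in>B. \<epsilon> \<le> \<bar>y n t - g t\<bar>} < \<delta>)"
    unfolding net_ev_def by blast
qed

lemma lm_conv_subseq:
  fixes x :: "nat \<Rightarrow> 'a \<Rightarrow> real" and r :: "nat \<Rightarrow> nat"
  assumes "lm_conv M UNIV (\<le>) x f" "strict_mono r"
  shows "lm_conv M UNIV (\<le>) (\<lambda>n. x (r n)) f"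
  unfolding lm_conv_def
proof (intro allI impI ballI)
  fix \<epsilon> \<delta> :: real and B assume "\<epsilon> > 0" "B \<in> sets M" "emeasure M B < \<infinity>" "\<delta> > 0"
  then obtain a where a: "\<And>n. a \<le> n \<Longrightarrow> measure M {t\<in>B. \<epsilon> \<le> \<bar>x n t - f t\<bar>} < \<delta>"
    using assms(1) unfolding lm_conv_def net_ev_def by blast
  have "a \<le> r n" if "a \<le> n" for n using seq_suble[OF assms(2), of n] that by simp
  with a show "net_ev UNIV (\<le>) (\<lambda>n. measure M {t\<in>B. \<epsilon> \<le> \<bar>x (r n) t - f t\<bar>} < \<delta>)"
    unfolding net_ev_def by blast
qed

lemma directed_set_nat: "directed_set (UNIV :: nat set) (\<le>)"
  unfolding directed_set_def by (auto intro: max.cobounded1 max.cobounded2)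

lemma net_ev_beyond:
  assumes dir: "directed_set A le" and P: "net_ev A le P" and "a \<in> A"
  shows "\<exists>a'\<in>A. le a a' \<and> P a' \<and> (\<not> (\<exists>c\<in>A. \<forall>b\<in>A. le b c) \<longrightarrow> \<not> le a' a)"
proof -
  have trans: "\<And>a b c. a \<in> A \<Longrightarrow> b \<in> A \<Longrightarrow> c \<in> A \<Longrightarrow> le a b \<Longrightarrow> le b c \<Longrightarrow> le a c"
    and ub: "\<And>a b. a \<in> A \<Longrightarrow> b \<in> A \<Longrightarrow> \<exists>c\<in>A. le a c \<and> le b c"
    using dir unfolding directed_set_def by blast+
  obtain a1 where a1: "a1 \<in> A" "\<And>b. b \<in> A \<Longrightarrow> le a1 b \<Longrightarrow> P b"
    using P unfolding net_ev_def by blast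
  obtain b where b: "b \<in> A" "\<not> (\<exists>c\<in>A. \<forall>b\<in>A. le b c) \<longrightarrow> \<not> le b a"
  proof (cases "\<exists>c\<in>A. \<forall>b\<in>A. le b c")
    case True
    with \<open>a \<in> A\<close> that show ?thesis by blast
  next
    case False
    then obtain b where "b \<in> A" "\<not> le b a" using \<open>a \<in> A\<close> by blast
    with that show ?thesis by blast
  qed
  obtain c where c: "c \<in> A" "le a1 c" "le a c" using ub[OF a1(1) \<open>a \<in> A\<close>] by blast
  obtain c' where c': "c' \<in> A" "le c c'" "le b c'" using ub[OF c(1) b(1)] by blast
  have "le a c'" by (rule trans[OF \<open>a \<in> A\<close> c(1) c'(1) c(3) c'(2)])
  moreover have "P c'" by (rule a1(2)[OF c'(1) trans[OF a1(1) c(1) c'(1) c(2) c'(2)]])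
  moreover have "\<not> (\<exists>c\<in>A. \<forall>b\<in>A. le b c) \<longrightarrow> \<not> le c' a"
    using trans[OF b(1) c'(1) \<open>a \<in> A\<close> c'(3)] b(2) by blast
  ultimately show ?thesis using c'(1) by blast
qed

lemma AE_tendsto_on_exhaustion:
  fixes y :: "nat \<Rightarrow> 'a \<Rightarrow> real"
  assumes C: "\<And>n. C n \<in> fmeasurable M" "incseq C"
    and [measurable]: "\<And>n. y n \<in> borel_measurable M" "f \<in> borel_measurable M"
    and dev: "\<And>n. measure M {t\<in>C n. \<epsilon> n \<le> \<bar>y n t - f t\<bar>} \<le> \<epsilon> n" and "summable \<epsilon>"
  shows "AE t in M. t \<in> (\<Union>n. C n) \<longrightarrow> (\<lambda>n. y n t) \<longlonglongrightarrow> f t"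
proof -
  note [measurable] = C(1)
  define E where "E n = {t\<in>C n. \<epsilon> n \<le> \<bar>y n t - f t\<bar>}" for n
  have E: "E n \<in> fmeasurable M" for n
    unfolding E_def by (rule fmeasurableI2[OF C(1)]) auto
  have "summable (\<lambda>n. measure M (E n))"
    by (rule summable_comparison_test[OF _ \<open>summable \<epsilon>\<close>]) (use dev in \<open>simp add: E_def\<close>)
  with E have "AE t in M. eventually (\<lambda>n. t \<in> space M - E n) sequentially"
    by (intro borel_cantelli_AE1) (auto simp: fmeasurable_def)
  then have "AE t in M. eventually (\<lambda>n. t \<notin> E n) sequentially"
    by (rule eventually_mono) (auto elim: eventually_mono)
  then show ?thesis
  proof (rule eventually_mono, intro impI)
    fix t assume ev: "eventually (\<lambda>n. t \<notin> E n) sequentially" and "t \<in> (\<Union>n. C n)"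
    then obtain N where "t \<in> C N" by blast
    then have "eventually (\<lambda>n. t \<in> C n) sequentially"
      using C(2) unfolding eventually_sequentially incseq_def by blast
    with ev have "eventually (\<lambda>n. norm (y n t - f t) \<le> \<epsilon> n) sequentially"
      by eventually_elim (auto simp: E_def)
    then have "(\<lambda>n. y n t - f t) \<longlonglongrightarrow> 0"
      using summable_LIMSEQ_zero[OF \<open>summable \<epsilon>\<close>] by (rule Lim_null_comparison)
    then show "(\<lambda>n. y n t) \<longlonglongrightarrow> f t" by (rule LIM_zero_cancel)
  qed
qed

definition support_cover_union :: "'a measure \<Rightarrow> ('a \<Rightarrow> real) set \<Rightarrow> nat \<Rightarrow> 'a set" where
  "support_cover_union M H n = (\<Union>h\<in>H. \<Union>j\<le>n. support_cover M h j)"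

lemma support_cover_union_fmeasurable:
  "finite H \<Longrightarrow> H \<subseteq> Esp M \<Longrightarrow> support_cover_union M H n \<in> fmeasurable M"
  unfolding support_cover_union_def
  by (intro fmeasurable.finite_UN finite_atMost support_cover_fmeasurable) auto

lemma support_cover_union_mono:
  "H \<subseteq> H' \<Longrightarrow> m \<le> n \<Longrightarrow> support_cover_union M H m \<subseteq> support_cover_union M H' n"
  unfolding support_cover_union_def by (intro UN_mono) auto

lemma AE_tendsto_of_support_cover_deviation:
  fixes y :: "nat \<Rightarrow> 'a \<Rightarrow> real"
  assumes H: "\<And>n. finite (H n)" "\<And>n. H n \<subseteq> Esp M" "incseq H" "f \<in> H 0" "\<And>n. y n \<in> H (Suc n)"
    and dev: "\<And>n. measure M {t\<in>support_cover_union M (H n) n. \<epsilon> n \<le> \<bar>y n t - f t\<bar>} \<le> \<epsilon> n"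
    and "summable \<epsilon>"
  shows "AE t in M. (\<lambda>n. y n t) \<longlonglongrightarrow> f t"
proof -
  define C where "C n = support_cover_union M (H n) n" for n
  have C: "C n \<in> fmeasurable M" for n
    unfolding C_def using H(1,2) by (rule support_cover_union_fmeasurable)
  have "incseq C"
  proof (rule incseq_SucI)
    fix n show "C n \<subseteq> C (Suc n)"
      unfolding C_def using H(3) by (intro support_cover_union_mono) (auto simp: incseq_Suc_iff)
  qed
  have f: "f \<in> Esp M" using H(2)[of 0] H(4) by blast
  have y: "y n \<in> Esp M" for n using H(2)[of "Suc n"] H(5)[of n] by blast
  have "AE t in M. t \<in> (\<Union>n. C n) \<longrightarrow> (\<lambda>n. y n t) \<longlonglongrightarrow> f t"
    by (rule AE_tendsto_on_exhaustion[where \<epsilon> = \<epsilon>, OF C \<open>incseq C\<close>])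
      (use y f dev \<open>summable \<epsilon>\<close> in \<open>auto simp: C_def\<close>)
  moreover have "AE t in M. t \<notin> (\<Union>n. C n) \<longrightarrow> f t = 0 \<and> (\<forall>m. y m t = 0)"
  proof -
    have cover: "t \<in> (\<Union>n. C n)" if "h \<in> H k" "t \<in> support_cover M h j" for h k j t
    proof -
      have "H k \<subseteq> H (max k j)" using H(3) by (simp add: incseq_def)
      with that(1) have "h \<in> H (max k j)" by blast
      moreover have "j \<in> {..max k j}" by simp
      ultimately have "t \<in> C (max k j)"
        using that(2) unfolding C_def support_cover_union_def by blast
      then show ?thesis by blast
    qed
    have "AE t in M. \<forall>m. y m t \<noteq> 0 \<longrightarrow> t \<in> (\<Union>j. support_cover M (y m) j)"
      unfolding AE_all_countable using y by (blast intro: AE_support_cover)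
    with AE_support_cover[OF f] show ?thesis
    proof eventually_elim
      case (elim t)
      show ?case
      proof (intro impI conjI allI)
        assume "t \<notin> (\<Union>n. C n)"
        then show "f t = 0" using elim(1) cover[OF H(4)] by blast
        show "y m t = 0" for m using \<open>t \<notin> (\<Union>n. C n)\<close> elim(2) cover[OF H(5)[of m]] by blast
      qed
    qed
  qed
  ultimately show ?thesis by eventually_elim auto
qed

lemma lm_conv_beyond:
  assumes dir: "directed_set A le" and L: "lm_conv M A le x f" and "a \<in> A"
    and C: "C \<in> fmeasurable M" and "\<epsilon> > 0"
  shows "\<exists>a'\<in>A. le a a' \<and> measure M {t\<in>C. \<epsilon> \<le> \<bar>x a' t - f t\<bar>} < \<epsilon> \<and>
    (\<not> (\<exists>c\<in>A. \<forall>b\<in>A. le b c) \<longrightarrow> \<not> le a' a)"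
proof -
  have "net_ev A le (\<lambda>\<alpha>. measure M {t\<in>C. \<epsilon> \<le> \<bar>x \<alpha> t - f t\<bar>} < \<epsilon>)"
    using L C \<open>\<epsilon> > 0\<close> unfolding lm_conv_def fmeasurable_def by blast
  from net_ev_beyond[OF dir this \<open>a \<in> A\<close>] show ?thesis by blast
qed

lemma lm_conv_embedded_seq:
  fixes x :: "'i \<Rightarrow> 'a \<Rightarrow> real"
  assumes dir: "directed_set A le" and x: "\<forall>\<alpha>\<in>A. x \<alpha> \<in> Esp M" and f: "f \<in> Esp M"
    and L: "lm_conv M A le x f"
  shows "\<exists>\<alpha>. embedded_seq A le \<alpha> \<and> (AE t in M. (\<lambda>n. x (\<alpha> n) t) \<longlonglongrightarrow> f t) \<and>
    lm_conv M UNIV (\<le>) (\<lambda>n. x (\<alpha> n)) f"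
proof -
  define \<epsilon> where "\<epsilon> n = (1 / 2 :: real) ^ n" for n
  define NL where "NL \<longleftrightarrow> \<not> (\<exists>c\<in>A. \<forall>b\<in>A. le b c)"
  have step: "\<exists>a'\<in>A. le a a' \<and>
      measure M {t\<in>support_cover_union M H n. \<epsilon> n \<le> \<bar>x a' t - f t\<bar>} < \<epsilon> n \<and> (NL \<longrightarrow> \<not> le a' a)"
    if "a \<in> A" "finite H" "H \<subseteq> Esp M" for a H n
    unfolding NL_def using that
    by (intro lm_conv_beyond[OF dir L] support_cover_union_fmeasurable) (auto simp: \<epsilon>_def)
  text \<open>The state at stage n is the index together with the set H of f and the functions chosen
    so far; measuring the deviation on the union of the first n pieces of their support covers
    makes these sets eventually exhaust the supports of f and of every chosen function.\<close>
  define P where "P n s \<longleftrightarrow> fst s \<in> A \<and> finite (snd s) \<and> snd s \<subseteq> Esp M \<and> f \<in> snd s \<and>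
      measure M {t\<in>support_cover_union M (snd s) n. \<epsilon> n \<le> \<bar>x (fst s) t - f t\<bar>} < \<epsilon> n" for n s
  define Q where "Q n s s' \<longleftrightarrow> snd s' = insert (x (fst s)) (snd s) \<and> le (fst s) (fst s') \<and>
      (NL \<longrightarrow> \<not> le (fst s') (fst s))" for n :: nat and s s'
  obtain s where s: "\<And>n. P n (s n)" "\<And>n. Q n (s n) (s (Suc n))"
  proof -
    obtain a0 where "a0 \<in> A" using dir by (auto simp: directed_set_def)
    have "\<exists>s. P 0 s"
      using step[OF \<open>a0 \<in> A\<close>, of "{f}" 0] f unfolding P_def by force
    moreover have "\<exists>s'. P (Suc n) s' \<and> Q n s s'" if "P n s" for n s
      using step[of "fst s" "insert (x (fst s)) (snd s)" "Suc n"] that x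
      unfolding P_def Q_def by force
    ultimately show thesis using dependent_nat_choice[of P Q] that by blast
  qed
  define \<alpha> where "\<alpha> n = fst (s n)" for n
  define H where "H n = snd (s n)" for n
  have "embedded_seq A le \<alpha>"
    using s unfolding embedded_seq_def P_def Q_def NL_def \<alpha>_def by blast
  moreover have conv: "AE t in M. (\<lambda>n. x (\<alpha> n) t) \<longlonglongrightarrow> f t"
  proof (rule AE_tendsto_of_support_cover_deviation)
    show "finite (H n)" "H n \<subseteq> Esp M"
      "measure M {t\<in>support_cover_union M (H n) n. \<epsilon> n \<le> \<bar>x (\<alpha> n) t - f t\<bar>} \<le> \<epsilon> n" for n
      using s(1)[of n] unfolding P_def \<alpha>_def H_def by auto
    show "incseq H" "x (\<alpha> n) \<in> H (Suc n)" for n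
      using s(2) unfolding Q_def \<alpha>_def H_def by (auto intro!: incseq_SucI)
    show "f \<in> H 0" using s(1)[of 0] unfolding P_def H_def by blast
    show "summable \<epsilon>" unfolding \<epsilon>_def by (rule summable_geometric) simp
  qed
  moreover have "lm_conv M UNIV (\<le>) (\<lambda>n. x (\<alpha> n)) f"
    using s(1) x f conv unfolding P_def \<alpha>_def
    by (intro AE_tendsto_imp_lm_conv Esp_borel_measurable) auto
  ultimately show ?thesis by blast
qed

lemma embedded_seq_nat_strict_mono:
  assumes "embedded_seq (UNIV :: nat set) (\<le>) \<alpha>"
  shows "strict_mono \<alpha>"
proof -
  have "\<not> (\<exists>c::nat. \<forall>b. b \<le> c)" by (metis Suc_n_not_le_n)
  with assms have "\<not> \<alpha> (Suc n) \<le> \<alpha> n" for n unfolding embedded_seq_def by auto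
  then have "\<alpha> n < \<alpha> (Suc n)" for n by (simp add: not_le)
  then show ?thesis by (simp add: strict_mono_Suc_iff)
qed

lemma lm_conv_iff_subseq_AE:
  fixes x :: "nat \<Rightarrow> 'a \<Rightarrow> real"
  assumes x: "\<forall>n. x n \<in> Esp M" and f: "f \<in> Esp M"
  shows "lm_conv M UNIV (\<le>) x f \<longleftrightarrow>
    (\<forall>r :: nat \<Rightarrow> nat. strict_mono r \<longrightarrow>
       (\<exists>s :: nat \<Rightarrow> nat. strict_mono s \<and> (AE t in M. (\<lambda>n. x (r (s n)) t) \<longlonglongrightarrow> f t)))"
proof (intro iffI allI impI)
  fix r :: "nat \<Rightarrow> nat" assume "lm_conv M UNIV (\<le>) x f" "strict_mono r"
  then have "lm_conv M UNIV (\<le>) (\<lambda>n. x (r n)) f" by (rule lm_conv_subseq)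
  moreover have "\<forall>n\<in>UNIV. x (r n) \<in> Esp M" using x by simp
  ultimately obtain s where "embedded_seq UNIV (\<le>) s" "AE t in M. (\<lambda>n. x (r (s n)) t) \<longlonglongrightarrow> f t"
    using lm_conv_embedded_seq[OF directed_set_nat _ f, of "\<lambda>n. x (r n)"] by auto
  then show "\<exists>s. strict_mono s \<and> (AE t in M. (\<lambda>n. x (r (s n)) t) \<longlonglongrightarrow> f t)"
    using embedded_seq_nat_strict_mono by blast
next
  assume R: "\<forall>r :: nat \<Rightarrow> nat. strict_mono r \<longrightarrow>
    (\<exists>s :: nat \<Rightarrow> nat. strict_mono s \<and> (AE t in M. (\<lambda>n. x (r (s n)) t) \<longlonglongrightarrow> f t))"
  show "lm_conv M UNIV (\<le>) x f"
  proof (rule ccontr)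
    assume "\<not> lm_conv M UNIV (\<le>) x f"
    then obtain \<epsilon> \<delta> :: real and B where B: "B \<in> sets M" "emeasure M B < \<infinity>" and "\<epsilon> > 0" "\<delta> > 0"
      and not_ev: "\<not> net_ev UNIV (\<le>) (\<lambda>n. measure M {t\<in>B. \<epsilon> \<le> \<bar>x n t - f t\<bar>} < \<delta>)"
      unfolding lm_conv_def by blast
    define S where "S = {n. \<delta> \<le> measure M {t\<in>B. \<epsilon> \<le> \<bar>x n t - f t\<bar>}}"
    have "infinite S"
      using not_ev unfolding S_def net_ev_def infinite_nat_iff_unbounded_le by (auto simp: not_less)
    then obtain r :: "nat \<Rightarrow> nat" where r: "strict_mono r" "\<And>n. r n \<in> S"
      using infinite_enumerate by blast
    then obtain s where s: "strict_mono s" "AE t in M. (\<lambda>n. x (r (s n)) t) \<longlonglongrightarrow> f t"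
      using R by blast
    have "lm_conv M UNIV (\<le>) (\<lambda>n. x (r (s n))) f"
      using x f s(2) by (intro AE_tendsto_imp_lm_conv Esp_borel_measurable) auto
    then obtain n where "measure M {t\<in>B. \<epsilon> \<le> \<bar>x (r (s n)) t - f t\<bar>} < \<delta>"
      using B \<open>\<epsilon> > 0\<close> \<open>\<delta> > 0\<close> unfolding lm_conv_def net_ev_def by blast
    with r(2)[of "s n"] show False by (simp add: S_def)
  qed
qed

theorem corollary5p12:
  fixes M :: "'a measure"
  assumes "semifinite M"
  shows "solid_linear_top M (lm_topology M) \<and>
    (\<forall>(A :: 'i set) le x f. directed_set A le \<and> (\<forall>\<alpha>\<in>A. x \<alpha> \<in> Esp M) \<and> f \<in> Esp M \<and>
        uo_conv M A le x f \<longrightarrow> net_limitin (lm_topology M) A le x f) \<and>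
    (\<forall>(A :: 'i set) le x f. directed_set A le \<and> (\<forall>\<alpha>\<in>A. x \<alpha> \<in> Esp M) \<and> f \<in> Esp M \<longrightarrow>
        (net_limitin (lm_topology M) A le x f \<longleftrightarrow> lm_conv M A le x f)) \<and>
    countable_sup_property M \<and>
    (\<forall>(A :: 'i set) le x f. directed_set A le \<and> (\<forall>\<alpha>\<in>A. x \<alpha> \<in> Esp M) \<and> f \<in> Esp M \<and>
        lm_conv M A le x f \<longrightarrow>
        (\<exists>\<alpha>. embedded_seq A le \<alpha> \<and>
           (AE t in M. (\<lambda>n. x (\<alpha> n) t) \<longlonglongrightarrow> f t) \<and>
           lm_conv M UNIV (\<le>) (\<lambda>n. x (\<alpha> n)) f)) \<and>
    (\<forall>(x :: nat \<Rightarrow> 'a \<Rightarrow> real) f. (\<forall>n. x n \<in> Esp M) \<and> f \<in> Esp M \<longrightarrow>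
        (lm_conv M UNIV (\<le>) x f \<longleftrightarrow>
         (\<forall>r :: nat \<Rightarrow> nat. strict_mono r \<longrightarrow> (\<exists>s :: nat \<Rightarrow> nat. strict_mono s \<and>
            (AE t in M. (\<lambda>n. x (r (s n)) t) \<longlonglongrightarrow> f t)))))"
proof (intro conjI allI impI; (elim conjE)?)
  show "solid_linear_top M (lm_topology M)" by (rule solid_linear_top_lm_topology)
  show "countable_sup_property M" by (rule countable_sup_property_Esp)
  fix A :: "'i set" and le x f
  assume x: "\<forall>\<alpha>\<in>A. x \<alpha> \<in> Esp M" and f: "f \<in> Esp M"
  show "net_limitin (lm_topology M) A le x f \<longleftrightarrow> lm_conv M A le x f"
    using x f by (rule net_limitin_lm_topology_iff_lm_conv)
  show "net_limitin (lm_topology M) A le x f" if "uo_conv M A le x f"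
    using x f uo_conv_imp_lm_conv[OF x f that] by (simp add: net_limitin_lm_topology_iff_lm_conv)
  show "\<exists>\<alpha>. embedded_seq A le \<alpha> \<and> (AE t in M. (\<lambda>n. x (\<alpha> n) t) \<longlonglongrightarrow> f t) \<and>
      lm_conv M UNIV (\<le>) (\<lambda>n. x (\<alpha> n)) f" if "directed_set A le" "lm_conv M A le x f"
    using that(1) x f that(2) by (rule lm_conv_embedded_seq)
next
  fix x :: "nat \<Rightarrow> 'a \<Rightarrow> real" and f
  assume "\<forall>n. x n \<in> Esp M" "f \<in> Esp M"
  then show "lm_conv M UNIV (\<le>) x f \<longleftrightarrow> (\<forall>r :: nat \<Rightarrow> nat. strict_mono r \<longrightarrow>
      (\<exists>s :: nat \<Rightarrow> nat. strict_mono s \<and> (AE t in M. (\<lambda>n. x (r (s n)) t) \<longlonglongrightarrow> f t)))"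
    by (rule lm_conv_iff_subseq_AE)
qed

end
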